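(* Let $p_0,s_0,r_0,p,s,r\in(0,\infty]$ satisfy $\frac1p-\frac1{p_0}=\frac1s-\frac1{s_0}=\frac1{r_0}-\frac1r=:\frac1\gamma$. Let $w,v$ be weights with $[w,v]_{(s,r)}<\infty$, and let $(t_0,t,w_t,v_t,W)$ be associated to $(\frac1\gamma,s_0,r_0,w,v)$ as in the context. If $\mathcal M$ is bounded from $L^t_{v_t}(\Omega)$ to $L^t_{w_t}(\Omega)$, then $$L^p_v(\Omega)\subseteq\bigcup_{(w_0,v_0)\in W}L^{p_0}_{v_0}(\Omega).$$
   Context: $(\Omega,\mu)$ is a $\sigma$-finite measure space with a fixed basis of sets $\mathcal U$: a countable collection of measurable sets $U$ with $0<\mu(U)<\infty$ such that $\bigcup_{U\in\mathcal U}U=\Omega$ and for all $x,y\in\Omega$ there is $U\in\mathcal U$ with $x,y\in U$. A weight is a measurable function $w:\Omega\to(0,\infty)$. For $p\in(0,\infty]$ and a weight $w$, $L^p_w(\Omega)$ is the space of measurable $f$ with $\|f\|_{L^p_w(\Omega)}:=\|fw\|_{L^p(\Omega)}<\infty$. For $s,r\in(0,\infty]$ and weights $w,v$, $[w,v]_{(s,r)}:=\sup_{U\in\mathcal U}\mu(U)^{-\frac1s-\frac1r}\|w\|_{L^s(U)}\|v^{-1}\|_{L^r(U)}$ (with $\frac1\infty:=0$). The maximal operator is $\mathcal Mf:=\sup_{U\in\mathcal U}\mu(U)^{-1}\|f\|_{L^1(U)}\mathbf 1_U$. Weight classes and rescaled exponents: given $\frac1\gamma\in\mathbb R$, $s_0,r_0\in(0,\infty]$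 and weights $w,v$, define $s,r\in(0,\infty]$ by $\frac1s-\frac1{s_0}=\frac1{r_0}-\frac1r=\frac1\gamma$ and $\alpha$ by $\frac1\alpha=\frac1{s_0}+\frac1{r_0}$. If $\frac1\gamma>0$: $t_0:=s_0/\alpha$, $t:=s/\alpha$, $(w_t,v_t):=(w^\alpha,v^\alpha)$. If $\frac1\gamma=0$: $t_0:=t:=1$ (no $w_t,v_t$). If $\frac1\gamma<0$: $t_0:=r_0/\alpha$, $t:=r/\alpha$, $(w_t,v_t):=(v^{-\alpha},w^{-\alpha})$. Set $W:=\{(w,v)\}$ if $\frac1\gamma=0$, and otherwise $W:=\{(\tilde w,\tilde v)$ pairs of weights $:\tilde w\tilde v^{-1}=wv^{-1},\ [\tilde w,\tilde v]_{(s_0,r_0)}<\infty\}$. Convention: when $\frac1\gamma=0$, the hypothesis "$\mathcal M$ bounded from $L^t_{v_t}$ to $L^t_{w_t}$" is regarded as satisfied. *)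

theory Defs
  imports "HOL-Analysis.Analysis" "HOL-Probability.Essential_Supremum"
begin

text \<open>Exponents in (0,\<infinity>] are modelled as ennreal values p > 0.
  Reciprocal 1/p (with 1/\<infinity> = 0):\<close>
definition rcp :: "ennreal \<Rightarrow> real" where
  "rcp p = enn2real (inverse p)"

definition epow :: "ennreal \<Rightarrow> real \<Rightarrow> ennreal" where
  "epow x q = (if x = \<infinity> then \<infinity> else ennreal (enn2real x powr q))"

definition Lnorm :: "'a measure \<Rightarrow> ennreal \<Rightarrow> 'a set \<Rightarrow> ('a \<Rightarrow> ennreal) \<Rightarrow> ennreal" where
  "Lnorm M p A g =
     (if p = \<infinity> then esssup M (\<lambda>x. g x * indicator A x)
      else epow (\<integral>\<^sup>+ x \<in> A. epow (g x) (enn2real p) \<partial>M) (1 / enn2real p))"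

text \<open>Weighted norm: norm of f in L^p_w is the L^p norm of f w.\<close>
definition wnorm :: "'a measure \<Rightarrow> ennreal \<Rightarrow> ('a \<Rightarrow> real) \<Rightarrow> ('a \<Rightarrow> real) \<Rightarrow> ennreal" where
  "wnorm M p w f = Lnorm M p (space M) (\<lambda>x. ennreal (\<bar>f x\<bar> * w x))"

definition Lpw :: "'a measure \<Rightarrow> ennreal \<Rightarrow> ('a \<Rightarrow> real) \<Rightarrow> ('a \<Rightarrow> real) set" where
  "Lpw M p w = {f. f \<in> borel_measurable M \<and> wnorm M p w f < \<infinity>}"

definition weight :: "'a measure \<Rightarrow> ('a \<Rightarrow> real) \<Rightarrow> bool" where
  "weight M w \<longleftrightarrow> w \<in> borel_measurable M \<and> (\<forall>x\<in>space M. 0 < w x)"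

definition basis_of_sets :: "'a measure \<Rightarrow> 'a set set \<Rightarrow> bool" where
  "basis_of_sets M \<U> \<longleftrightarrow> countable \<U> \<and>
     (\<forall>U\<in>\<U>. U \<in> sets M \<and> 0 < emeasure M U \<and> emeasure M U < \<infinity>) \<and>
     \<Union>\<U> = space M \<and>
     (\<forall>x\<in>space M. \<forall>y\<in>space M. \<exists>U\<in>\<U>. x \<in> U \<and> y \<in> U)"

definition wv_const :: "'a measure \<Rightarrow> 'a set set \<Rightarrow> ennreal \<Rightarrow> ennreal \<Rightarrow>
    ('a \<Rightarrow> real) \<Rightarrow> ('a \<Rightarrow> real) \<Rightarrow> ennreal" where
  "wv_const M \<U> s r w v = (SUP U\<in>\<U>.
      ennreal (measure M U powr (- (rcp s + rcp r)))
      * Lnorm M s U (\<lambda>x. ennreal (w x)) * Lnorm M r U (\<lambda>x. ennreal (1 / v x)))"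

definition maxop :: "'a measure \<Rightarrow> 'a set set \<Rightarrow> ('a \<Rightarrow> real) \<Rightarrow> 'a \<Rightarrow> ennreal" where
  "maxop M \<U> f x = (SUP U\<in>\<U>.
      ennreal (1 / measure M U) * Lnorm M 1 U (\<lambda>y. ennreal \<bar>f y\<bar>) * indicator U x)"

definition maxop_bounded :: "'a measure \<Rightarrow> 'a set set \<Rightarrow> ennreal \<Rightarrow>
    ('a \<Rightarrow> real) \<Rightarrow> ('a \<Rightarrow> real) \<Rightarrow> bool" where
  "maxop_bounded M \<U> t v w \<longleftrightarrow> (\<exists>C::real. \<forall>f \<in> Lpw M t v.
      Lnorm M t (space M) (\<lambda>x. maxop M \<U> f x * ennreal (w x)) \<le> ennreal C * wnorm M t v f)"

text \<open>Rescaled exponents; gi stands for 1/gamma.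
  1/alpha = 1/s0 + 1/r0.\<close>
definition alpha_exp :: "ennreal \<Rightarrow> ennreal \<Rightarrow> real" where
  "alpha_exp s0 r0 = 1 / (rcp s0 + rcp r0)"

definition t_exp :: "real \<Rightarrow> ennreal \<Rightarrow> ennreal \<Rightarrow> ennreal \<Rightarrow> ennreal \<Rightarrow> ennreal" where
  "t_exp gi s0 r0 s r =
     (if gi > 0 then s / ennreal (alpha_exp s0 r0)
      else if gi = 0 then 1 else r / ennreal (alpha_exp s0 r0))"

definition t0_exp :: "real \<Rightarrow> ennreal \<Rightarrow> ennreal \<Rightarrow> ennreal" where
  "t0_exp gi s0 r0 =
     (if gi > 0 then s0 / ennreal (alpha_exp s0 r0)
      else if gi = 0 then 1 else r0 / ennreal (alpha_exp s0 r0))"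

text \<open>(w_t, v_t): (w^alpha, v^alpha) if gi > 0, (v^-alpha, w^-alpha) if gi < 0
  (unused if gi = 0).\<close>
definition wt_weight :: "real \<Rightarrow> ennreal \<Rightarrow> ennreal \<Rightarrow> ('a \<Rightarrow> real) \<Rightarrow> ('a \<Rightarrow> real) \<Rightarrow> 'a \<Rightarrow> real" where
  "wt_weight gi s0 r0 w v x =
     (if gi > 0 then w x powr alpha_exp s0 r0 else v x powr (- alpha_exp s0 r0))"

definition vt_weight :: "real \<Rightarrow> ennreal \<Rightarrow> ennreal \<Rightarrow> ('a \<Rightarrow> real) \<Rightarrow> ('a \<Rightarrow> real) \<Rightarrow> 'a \<Rightarrow> real" where
  "vt_weight gi s0 r0 w v x =
     (if gi > 0 then v x powr alpha_exp s0 r0 else w x powr (- alpha_exp s0 r0))"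

definition W_class :: "'a measure \<Rightarrow> 'a set set \<Rightarrow> real \<Rightarrow> ennreal \<Rightarrow> ennreal \<Rightarrow>
    ('a \<Rightarrow> real) \<Rightarrow> ('a \<Rightarrow> real) \<Rightarrow> (('a \<Rightarrow> real) \<times> ('a \<Rightarrow> real)) set" where
  "W_class M \<U> gi s0 r0 w v =
     (if gi = 0 then {(w, v)}
      else {(w', v'). weight M w' \<and> weight M v' \<and>
              (\<forall>x\<in>space M. w' x / v' x = w x / v x) \<and>
              wv_const M \<U> s0 r0 w' v' < \<infinity>})"

end

theory Submission
  imports Defs
begin

text \<open>If \<open>1/\<gamma> = 0\<close> then \<open>p = p0\<close> and there is nothing to show. Otherwise \<open>f \<in> L^p_v\<close> is placed
  in \<open>L^p0_v0\<close> for a pair \<open>(w0, v0) = (w \<Psi>^c, v \<Psi>^c)\<close>, which has the same quotient \<open>w/v\<close>.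
  The factor \<open>\<Psi>\<close> comes from the Rubio de Francia iteration \<open>\<Phi> = \<Sum>\<^sub>k L^-k T^k g\<close> for the
  operator \<open>T \<phi> = (w/v)^\<alpha> \<M> \<phi>\<close>, which is bounded on \<open>L^t_{v^\<alpha>}\<close> by the hypothesis on \<open>\<M>\<close>:
  \<open>\<Phi>\<close> dominates \<open>g\<close>, lies in \<open>L^t_{v^\<alpha>}\<close>, and satisfies the \<open>A_1\<close>-type condition
  \<open>avg_U \<Phi> \<cdot> (w/v)^\<alpha> \<le> L \<Phi>\<close> on every \<open>U \<in> \<U>\<close>. For \<open>\<Psi> = \<Phi>^(1/\<alpha>) v\<close> and \<open>q = s/\<gamma>\<close>,
  this condition and Hoelder's inequality give
  \<open>[w \<Psi>^-q, v \<Psi>^-q]_(s0,r0) \<le> L^(q/\<alpha>) [w, v]_(s,r)^(1-q)\<close>.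
  If \<open>1/\<gamma> > 0\<close>, \<open>g\<close> is built from \<open>|f| v\<close> so that \<open>|f| v \<Psi>^-q \<le> (|f| v)^(p/p0)\<close>.
  If \<open>1/\<gamma> < 0\<close>, the construction is applied to the dual pair \<open>(1/v, 1/w)\<close> with exponents
  \<open>r, s\<close>, and Young's inequality bounds \<open>\<integral> (|f| v \<Psi>^q)^p0\<close> by \<open>\<integral> (|f| v)^p + \<integral> \<Psi>^r\<close>.\<close>

lemma epow_0 [simp]: "q > 0 \<Longrightarrow> epow 0 q = 0"
  by (simp add: epow_def)

lemma epow_top [simp]: "epow top q = top"
  by (simp add: epow_def)

lemma epow_ennreal: "0 \<le> x \<Longrightarrow> epow (ennreal x) q = ennreal (x powr q)"
  by (simp add: epow_def)

lemma epow_1 [simp]: "epow x 1 = x"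
  by (cases x) (auto simp: epow_def)

lemma epow_epow: "a > 0 \<Longrightarrow> b > 0 \<Longrightarrow> epow (epow x a) b = epow x (a * b)"
  by (cases x) (auto simp: epow_ennreal powr_powr)

lemma epow_eq_0_iff [simp]: "q > 0 \<Longrightarrow> epow x q = 0 \<longleftrightarrow> x = 0"
  by (cases x) (auto simp: epow_ennreal)

lemma epow_eq_top_iff [simp]: "epow x q = top \<longleftrightarrow> x = top"
  by (cases x) (auto simp: epow_ennreal)

lemma epow_less_top_iff [simp]: "epow x q < top \<longleftrightarrow> x < top"
  using epow_eq_top_iff by (metis top.not_eq_extremum)

lemma epow_epow_inverse: "q > 0 \<Longrightarrow> epow (epow x q) (1 / q) = x"
  using epow_epow[of q "1/q" x] by (cases x) (simp_all add: epow_def)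

lemma epow_mono: "x \<le> y \<Longrightarrow> q \<ge> 0 \<Longrightarrow> epow x q \<le> epow y q"
proof (cases y)
  case (real b)
  moreover assume "x \<le> y" "q \<ge> 0"
  moreover obtain a where "x = ennreal a" "0 \<le> a" "a \<le> b"
    using calculation by (cases x) (auto simp: top_unique)
  ultimately show ?thesis by (simp add: epow_ennreal powr_mono2)
qed (simp add: epow_def)

lemma epow_le_iff: "q > 0 \<Longrightarrow> epow x q \<le> epow y q \<longleftrightarrow> x \<le> y"
  using epow_mono[of "epow x q" "epow y q" "1/q"] epow_mono[of x y q] by (auto simp: epow_epow_inverse)

lemma epow_mult: "q > 0 \<Longrightarrow> epow (x * y) q = epow x q * epow y q"
proof (cases x)
  case (real a)
  moreover assume "q > 0"
  ultimately show ?thesis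
    by (cases y; cases "a = 0")
      (simp_all add: epow_ennreal powr_mult ennreal_mult_top flip: ennreal_mult)
next
  case top
  moreover assume "q > 0"
  ultimately show ?thesis by (cases "y = 0") (simp_all add: ennreal_top_mult)
qed

lemma epow_measurable [measurable]:
  assumes "f \<in> borel_measurable M"
  shows "(\<lambda>x. epow (f x) q) \<in> borel_measurable M"
proof -
  have "(\<lambda>x. epow (f x) q) = (\<lambda>x. if f x = top then top else ennreal (enn2real (f x) powr q))"
    by (simp add: epow_def fun_eq_iff)
  also have "\<dots> \<in> borel_measurable M" using assms by measurable
  finally show ?thesis .
qed

lemma enn2real_pos: "0 < p \<Longrightarrow> p \<noteq> top \<Longrightarrow> 0 < enn2real (p::ennreal)"
  by (simp add: enn2real_positive_iff top.not_eq_extremum)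

lemma rcp_top [simp]: "rcp top = 0"
  by (simp add: rcp_def)

lemma rcp_nonneg: "0 \<le> rcp p"
  by (simp add: rcp_def)

lemma rcp_ennreal: "0 < x \<Longrightarrow> rcp (ennreal x) = 1 / x"
  by (simp add: rcp_def inverse_ennreal inverse_eq_divide)

lemma rcp_finite: "0 < p \<Longrightarrow> p \<noteq> top \<Longrightarrow> rcp p = 1 / enn2real p"
  by (metis enn2real_pos ennreal_enn2real_if rcp_ennreal)

lemma rcp_eq_0_iff: "0 < p \<Longrightarrow> rcp p = 0 \<longleftrightarrow> p = top"
  using rcp_finite[of p] enn2real_pos[of p] by fastforce

lemma finite_if_rcp_pos: "0 < rcp p \<Longrightarrow> p \<noteq> top"
  by auto

lemma rcp_inj: "0 < p \<Longrightarrow> 0 < q \<Longrightarrow> rcp p = rcp q \<Longrightarrow> p = q"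
proof (cases "p = top"; cases "q = top")
  assume "0 < p" "0 < q" "rcp p = rcp q" "p \<noteq> top" "q \<noteq> top"
  then have "enn2real p = enn2real q"
    using rcp_finite[of p] rcp_finite[of q] enn2real_pos[of p] enn2real_pos[of q] by (simp add: divide_eq_eq)
  then show "p = q" using \<open>p \<noteq> top\<close> \<open>q \<noteq> top\<close> by (metis ennreal_enn2real_if)
qed (auto simp: rcp_eq_0_iff)

section \<open>The quasi-norms \<open>Lnorm\<close>\<close>

lemma Lnorm_finite:
  "p \<noteq> top \<Longrightarrow> Lnorm M p A g = epow (\<integral>\<^sup>+ x. epow (g x) (enn2real p) * indicator A x \<partial>M) (1 / enn2real p)"
  by (simp add: Lnorm_def)

lemma Lnorm_top: "Lnorm M top A g = esssup M (\<lambda>x. g x * indicator A x)"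
  by (simp add: Lnorm_def)

lemma Lnorm_one: "Lnorm M 1 A g = (\<integral>\<^sup>+ x. g x * indicator A x \<partial>M)"
  by (simp add: Lnorm_finite)

lemma esssup_le_iff:
  fixes h :: "'a \<Rightarrow> ennreal"
  assumes "h \<in> borel_measurable M"
  shows "esssup M h \<le> z \<longleftrightarrow> (AE x in M. h x \<le> z)"
  using esssup_AE[of h M] esssup_I[OF assms] by (auto elim: eventually_mono)

lemma Lnorm_mono:
  assumes [measurable]: "g \<in> borel_measurable M" "g' \<in> borel_measurable M" "A \<in> sets M"
    and "0 < p" and le: "AE x in M. x \<in> A \<longrightarrow> g x \<le> g' x"
  shows "Lnorm M p A g \<le> Lnorm M p A g'"
proof (cases "p = top")
  case True
  show ?thesis unfolding True Lnorm_top
    by (rule esssup_AE_mono) (use le in \<open>auto elim!: eventually_mono simp: indicator_def\<close>)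
next
  case False
  then have "0 < enn2real p" using \<open>0 < p\<close> by (simp add: enn2real_pos)
  then show ?thesis unfolding Lnorm_finite[OF False]
    by (intro epow_mono nn_integral_mono_AE)
      (use le in \<open>auto elim!: eventually_mono intro!: epow_mono simp: indicator_def\<close>)
qed

lemma Lnorm_cong:
  assumes "g \<in> borel_measurable M" "g' \<in> borel_measurable M" "A \<in> sets M" "0 < p"
    and "\<And>x. x \<in> space M \<Longrightarrow> g x = g' x"
  shows "Lnorm M p A g = Lnorm M p A g'"
  using assms by (intro antisym Lnorm_mono) (auto intro: AE_I2)

lemma Lnorm_cmult_le:
  assumes [measurable]: "g \<in> borel_measurable M" "A \<in> sets M" and "0 < p" "c \<noteq> top"
  shows "Lnorm M p A (\<lambda>x. c * g x) \<le> c * Lnorm M p A g"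
proof (cases "p = top")
  case True
  have "AE x in M. g x * indicator A x \<le> esssup M (\<lambda>x. g x * indicator A x)"
    by (rule esssup_AE)
  then have "AE x in M. c * g x * indicator A x \<le> c * esssup M (\<lambda>x. g x * indicator A x)"
    by (elim eventually_mono) (simp add: mult.assoc mult_left_mono)
  then show ?thesis unfolding True Lnorm_top
    by (rule esssup_I[rotated]) measurable
next
  case False
  have P: "0 < enn2real p" using False assms by (simp add: enn2real_pos)
  have "(\<integral>\<^sup>+ x. epow (c * g x) (enn2real p) * indicator A x \<partial>M)
      = epow c (enn2real p) * (\<integral>\<^sup>+ x. epow (g x) (enn2real p) * indicator A x \<partial>M)"
    using P by (simp add: epow_mult mult.assoc flip: nn_integral_cmult)
  then show ?thesis unfolding Lnorm_finite[OF False]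
    using P by (simp add: epow_mult epow_epow_inverse)
qed

lemma Lnorm_epow_le:
  assumes [measurable]: "g \<in> borel_measurable M" "A \<in> sets M" and "0 < p" "0 < q"
  shows "Lnorm M p A (\<lambda>x. epow (g x) q) \<le> epow (Lnorm M (p * ennreal q) A g) q"
proof (cases "p = top")
  case True
  have pq: "top * ennreal q = top" using assms by (simp add: ennreal_top_mult)
  have "AE x in M. g x * indicator A x \<le> esssup M (\<lambda>x. g x * indicator A x)"
    by (rule esssup_AE)
  then have "AE x in M. epow (g x) q * indicator A x \<le> epow (esssup M (\<lambda>x. g x * indicator A x)) q"
    by (elim eventually_mono) (use assms in \<open>auto simp: indicator_def intro: epow_mono\<close>)
  then show ?thesis unfolding True Lnorm_top pq
    by (rule esssup_I[rotated]) measurable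
next
  case False
  have P: "0 < enn2real p" using False assms by (simp add: enn2real_pos)
  have pq: "p * ennreal q \<noteq> top" using False assms by (simp add: ennreal_mult_eq_top_iff)
  have e: "enn2real (p * ennreal q) = enn2real p * q" using assms by (simp add: enn2real_mult)
  have "(\<integral>\<^sup>+ x. epow (epow (g x) q) (enn2real p) * indicator A x \<partial>M)
     = (\<integral>\<^sup>+ x. epow (g x) (enn2real p * q) * indicator A x \<partial>M)"
    using P assms by (simp add: epow_epow mult.commute)
  then show ?thesis unfolding Lnorm_finite[OF False] Lnorm_finite[OF pq] e
    using P assms by (simp add: epow_epow)
qed

lemma Lnorm_pos:
  assumes [measurable]: "g \<in> borel_measurable M" "A \<in> sets M" and "0 < p"
    and "emeasure M A > 0" and pos: "\<And>x. x \<in> A \<Longrightarrow> 0 < g x"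
  shows "0 < Lnorm M p A g"
proof (rule ccontr)
  assume "\<not> 0 < Lnorm M p A g"
  then have zero: "Lnorm M p A g = 0" by (simp add: not_less)
  have "AE x in M. g x * indicator A x = 0"
  proof (cases "p = top")
    case True
    then have "esssup M (\<lambda>x. g x * indicator A x) \<le> 0" using zero by (simp add: Lnorm_top)
    then show ?thesis by (subst (asm) esssup_le_iff) auto
  next
    case False
    have P: "0 < enn2real p" using False assms by (simp add: enn2real_pos)
    then have "(\<integral>\<^sup>+ x. epow (g x) (enn2real p) * indicator A x \<partial>M) = 0"
      using zero by (simp add: Lnorm_finite[OF False])
    then have "AE x in M. epow (g x) (enn2real p) * indicator A x = 0"
      by (subst (asm) nn_integral_0_iff_AE) auto
    then show ?thesis using P by (elim eventually_mono) simp
  qed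
  then have "AE x in M. x \<notin> A"
    by (elim eventually_mono) (metis pos indicator_simps(1) mult.comm_neutral not_less_zero)
  moreover have "{x \<in> space M. \<not> x \<notin> A} = A" using sets.sets_into_space[OF assms(2)] by auto
  ultimately have "emeasure M A = 0" using AE_iff_measurable[OF assms(2)] by simp
  then show False using assms by simp
qed

lemma Youngs_inequality_scaled:
  fixes x y a b \<theta> :: real
  assumes "0 < \<theta>" "\<theta> < 1" "0 < a" "0 < b" "0 \<le> x" "0 \<le> y"
  shows "x powr \<theta> * y powr (1 - \<theta>) \<le> (a powr \<theta> * b powr (1 - \<theta>)) * (\<theta> / a * x + (1 - \<theta>) / b * y)"
proof (cases "x = 0 \<or> y = 0")
  case True
  have "0 \<le> (a powr \<theta> * b powr (1 - \<theta>)) * (\<theta> / a * x + (1 - \<theta>) / b * y)"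
    using assms by (intro mult_nonneg_nonneg add_nonneg_nonneg) auto
  then show ?thesis using True assms by auto
next
  case False
  then have "(x / a) powr \<theta> * (y / b) powr (1 - \<theta>) \<le> \<theta> * (x / a) + (1 - \<theta>) * (y / b)"
    using assms by (intro Youngs_inequality_0) auto
  then have "(a powr \<theta> * b powr (1 - \<theta>)) * ((x / a) powr \<theta> * (y / b) powr (1 - \<theta>))
       \<le> (a powr \<theta> * b powr (1 - \<theta>)) * (\<theta> * (x / a) + (1 - \<theta>) * (y / b))"
    using assms by (intro mult_left_mono) auto
  moreover have "(a powr \<theta> * b powr (1 - \<theta>)) * ((x / a) powr \<theta> * (y / b) powr (1 - \<theta>))
      = x powr \<theta> * y powr (1 - \<theta>)"
    using assms False by (simp add: powr_divide field_simps)
  ultimately show ?thesis by simp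
qed

lemma epow_Youngs_inequality_scaled:
  assumes "0 < \<theta>" "\<theta> < 1" "0 < a" "0 < b"
  shows "epow x \<theta> * epow y (1 - \<theta>) \<le>
    ennreal (a powr \<theta> * b powr (1 - \<theta>)) * (ennreal (\<theta> / a) * x + ennreal ((1 - \<theta>) / b) * y)"
proof (cases "x = top \<or> y = top")
  case True
  then have "ennreal (\<theta> / a) * x + ennreal ((1 - \<theta>) / b) * y = top"
    using assms by (auto simp: ennreal_mult_eq_top_iff)
  moreover have "ennreal (a powr \<theta> * b powr (1 - \<theta>)) \<noteq> 0" using assms by simp
  ultimately show ?thesis by (metis ennreal_top_mult_left top_greatest)
next
  case False
  then obtain xr yr where x: "x = ennreal xr" "0 \<le> xr" and y: "y = ennreal yr" "0 \<le> yr"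
    by (metis enn2real_nonneg ennreal_enn2real_if)
  have "ennreal (xr powr \<theta> * yr powr (1 - \<theta>)) \<le>
      ennreal ((a powr \<theta> * b powr (1 - \<theta>)) * (\<theta> / a * xr + (1 - \<theta>) / b * yr))"
    using Youngs_inequality_scaled[OF assms x(2) y(2)] by (rule ennreal_leI)
  moreover have "ennreal ((a powr \<theta> * b powr (1 - \<theta>)) * (\<theta> / a * xr + (1 - \<theta>) / b * yr))
    = ennreal (a powr \<theta> * b powr (1 - \<theta>)) * (ennreal (\<theta> / a) * x + ennreal ((1 - \<theta>) / b) * y)"
    using assms x y by (simp add: ennreal_mult[symmetric] ennreal_plus[symmetric] del: ennreal_plus)
  ultimately show ?thesis
    using x y by (simp add: epow_ennreal ennreal_mult)
qed

lemma nn_integral_Holder: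
  assumes [measurable]: "F \<in> borel_measurable M" "G \<in> borel_measurable M" "A \<in> sets M"
    and \<theta>: "0 < \<theta>" "\<theta> < 1"
  shows "(\<integral>\<^sup>+ x. epow (F x) \<theta> * epow (G x) (1 - \<theta>) * indicator A x \<partial>M)
    \<le> epow (\<integral>\<^sup>+ x. F x * indicator A x \<partial>M) \<theta> * epow (\<integral>\<^sup>+ x. G x * indicator A x \<partial>M) (1 - \<theta>)"
    (is "?I \<le> epow ?I1 \<theta> * epow ?I2 (1 - \<theta>)")
proof (cases "?I1 = 0 \<or> ?I2 = 0")
  case True
  then have "AE x in M. F x * indicator A x = 0 \<or> G x * indicator A x = 0"
    by (auto simp: nn_integral_0_iff_AE elim: eventually_mono)
  then have "AE x in M. epow (F x) \<theta> * epow (G x) (1 - \<theta>) * indicator A x = 0"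
    by (elim eventually_mono) (use \<theta> in \<open>auto simp: indicator_def\<close>)
  then have "?I = (\<integral>\<^sup>+ x. 0 \<partial>M)" by (rule nn_integral_cong_AE)
  then show ?thesis by simp
next
  case False
  show ?thesis
  proof (cases "?I1 = top \<or> ?I2 = top")
    case True
    then show ?thesis using False \<theta> by (auto simp: ennreal_mult_eq_top_iff)
  next
    case False
    with \<open>\<not> (?I1 = 0 \<or> ?I2 = 0)\<close> obtain a b where a: "?I1 = ennreal a" "0 < a" and b: "?I2 = ennreal b" "0 < b"
      by (metis ennreal_enn2real_if not_le ennreal_eq_0_iff)
    have "?I \<le> (\<integral>\<^sup>+ x. ennreal (a powr \<theta> * b powr (1 - \<theta>)) *
        (ennreal (\<theta> / a) * (F x * indicator A x) + ennreal ((1 - \<theta>) / b) * (G x * indicator A x)) \<partial>M)"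
      using epow_Youngs_inequality_scaled[OF \<theta> a(2) b(2)]
      by (intro nn_integral_mono) (simp add: indicator_def)
    also have "\<dots> = ennreal (a powr \<theta> * b powr (1 - \<theta>)) * (ennreal (\<theta> / a) * ?I1 + ennreal ((1 - \<theta>) / b) * ?I2)"
      by (simp add: nn_integral_cmult nn_integral_add)
    also have "ennreal (\<theta> / a) * ?I1 + ennreal ((1 - \<theta>) / b) * ?I2 = 1"
      using a b \<theta> by (simp add: ennreal_mult[symmetric] ennreal_plus[symmetric] del: ennreal_plus)
    finally show ?thesis
      using a b by (simp add: epow_ennreal ennreal_mult)
  qed
qed

lemma Lnorm_Holder:
  assumes [measurable]: "f \<in> borel_measurable M" "g \<in> borel_measurable M" "A \<in> sets M"
    and pos: "0 < p" "0 < p1" "0 < p2" and fin: "p \<noteq> top" "p2 \<noteq> top"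
    and rcp: "rcp p = rcp p1 + rcp p2" and f_fin: "Lnorm M p1 A f \<noteq> top"
  shows "Lnorm M p A (\<lambda>x. f x * g x) \<le> Lnorm M p1 A f * Lnorm M p2 A g"
proof (cases "p1 = top")
  case True
  then have "p = p2" using rcp rcp_inj pos by simp
  define E where "E = Lnorm M p1 A f"
  have "AE x in M. f x * indicator A x \<le> E" unfolding E_def True Lnorm_top by (rule esssup_AE)
  then have "AE x in M. x \<in> A \<longrightarrow> f x * g x \<le> E * g x"
    by (elim eventually_mono) (auto intro: mult_right_mono)
  then have "Lnorm M p A (\<lambda>x. f x * g x) \<le> Lnorm M p A (\<lambda>x. E * g x)"
    using pos by (intro Lnorm_mono) auto
  also have "\<dots> \<le> E * Lnorm M p A g"
    using pos f_fin by (intro Lnorm_cmult_le) (auto simp: E_def)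
  finally show ?thesis unfolding E_def \<open>p = p2\<close> .
next
  case False
  define P P1 P2 where "P = enn2real p" and "P1 = enn2real p1" and "P2 = enn2real p2"
  have P: "0 < P" "0 < P1" "0 < P2" unfolding P_def P1_def P2_def
    using pos fin False by (auto intro: enn2real_pos)
  have "1 / P = 1 / P1 + 1 / P2" using rcp pos fin False by (simp add: rcp_finite P_def P1_def P2_def)
  then have "P / P1 + P / P2 = P * (1 / P)" by (simp add: field_simps)
  then have "P / P1 + P / P2 = 1" using P by simp
  then have \<theta>: "0 < P / P1" "P / P1 < 1" "1 - P / P1 = P / P2"
    using P by (smt (verit) divide_pos_pos)+
  have "(\<integral>\<^sup>+ x. epow (f x * g x) P * indicator A x \<partial>M)
     = (\<integral>\<^sup>+ x. epow (epow (f x) P1) (P / P1) * epow (epow (g x) P2) (1 - P / P1) * indicator A x \<partial>M)"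
    using P \<theta> by (simp add: epow_epow epow_mult)
  also have "\<dots> \<le> epow (\<integral>\<^sup>+ x. epow (f x) P1 * indicator A x \<partial>M) (P / P1)
      * epow (\<integral>\<^sup>+ x. epow (g x) P2 * indicator A x \<partial>M) (1 - P / P1)"
    using \<theta> by (intro nn_integral_Holder) auto
  finally have "epow (\<integral>\<^sup>+ x. epow (f x * g x) P * indicator A x \<partial>M) (1 / P)
      \<le> epow (epow (\<integral>\<^sup>+ x. epow (f x) P1 * indicator A x \<partial>M) (P / P1)
      * epow (\<integral>\<^sup>+ x. epow (g x) P2 * indicator A x \<partial>M) (1 - P / P1)) (1 / P)"
    using P by (intro epow_mono) auto
  also have "\<dots> = epow (\<integral>\<^sup>+ x. epow (f x) P1 * indicator A x \<partial>M) (1 / P1)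
      * epow (\<integral>\<^sup>+ x. epow (g x) P2 * indicator A x \<partial>M) (1 / P2)"
    using P \<theta> by (simp add: epow_mult epow_epow)
  finally show ?thesis
    using fin False by (simp add: Lnorm_finite P_def P1_def P2_def)
qed

lemma wnorm_finite:
  assumes "p \<noteq> top" "0 < p"
  shows "wnorm M p w f = epow (\<integral>\<^sup>+x. epow (ennreal (\<bar>f x\<bar> * w x)) (enn2real p) \<partial>M) (1 / enn2real p)"
proof -
  have "(\<integral>\<^sup>+x. epow (ennreal (\<bar>f x\<bar> * w x)) (enn2real p) * indicator (space M) x \<partial>M)
      = (\<integral>\<^sup>+x. epow (ennreal (\<bar>f x\<bar> * w x)) (enn2real p) \<partial>M)"
    by (rule nn_integral_cong) simp
  then show ?thesis unfolding wnorm_def using assms by (simp add: Lnorm_finite)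
qed

lemma Lpw_iff_nn_integral:
  assumes "p \<noteq> top" "0 < p"
  shows "f \<in> Lpw M p w \<longleftrightarrow>
    f \<in> borel_measurable M \<and> (\<integral>\<^sup>+x. epow (ennreal (\<bar>f x\<bar> * w x)) (enn2real p) \<partial>M) < top"
  unfolding Lpw_def wnorm_finite[OF assms] by simp

lemma weightD:
  "weight M w \<Longrightarrow> w \<in> borel_measurable M"
  "weight M w \<Longrightarrow> x \<in> space M \<Longrightarrow> 0 < w x"
  by (auto simp: weight_def)

lemma AE_finite_if_nn_integral_epow_finite:
  assumes "(\<integral>\<^sup>+x. epow (\<phi> x * ennreal (a x)) t \<partial>M) \<noteq> top" "\<And>x. x \<in> space M \<Longrightarrow> 0 < a x"
    and [measurable]: "\<phi> \<in> borel_measurable M" "a \<in> borel_measurable M"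
  shows "AE x in M. \<phi> x \<noteq> top"
proof -
  have "AE x in M. epow (\<phi> x * ennreal (a x)) t \<noteq> top"
    using nn_integral_PInf_AE[of "\<lambda>x. epow (\<phi> x * ennreal (a x)) t" M] assms(1) by simp
  then show ?thesis
    by (rule AE_mp) (use assms(2) in \<open>force intro!: AE_I2 simp: ennreal_mult_eq_top_iff\<close>)
qed

section \<open>The maximal operator on nonnegative functions\<close>

definition maxop_nn :: "'a measure \<Rightarrow> 'a set set \<Rightarrow> ('a \<Rightarrow> ennreal) \<Rightarrow> 'a \<Rightarrow> ennreal" where
  "maxop_nn M \<U> \<phi> x =
    (SUP U\<in>\<U>. ennreal (1 / measure M U) * (\<integral>\<^sup>+ y. \<phi> y * indicator U y \<partial>M) * indicator U x)"

lemma maxop_eq_maxop_nn: "maxop M \<U> f = maxop_nn M \<U> (\<lambda>y. ennreal \<bar>f y\<bar>)"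
  unfolding maxop_def maxop_nn_def by (simp add: Lnorm_one fun_eq_iff)

lemma basis_of_setsD:
  assumes "basis_of_sets M \<U>" "U \<in> \<U>"
  shows "U \<in> sets M" "U \<subseteq> space M" "0 < emeasure M U" "0 < measure M U"
proof -
  show U: "U \<in> sets M" and "0 < emeasure M U" using assms by (simp_all add: basis_of_sets_def)
  from U show "U \<subseteq> space M" by (rule sets.sets_into_space)
  show "0 < measure M U"
    using assms unfolding measure_def basis_of_sets_def by (simp add: enn2real_positive_iff)
qed

lemma maxop_nn_measurable [measurable]:
  assumes "basis_of_sets M \<U>"
  shows "maxop_nn M \<U> \<phi> \<in> borel_measurable M"
  unfolding maxop_nn_def[abs_def]
proof (rule borel_measurable_SUP)
  show "countable \<U>" using assms by (simp add: basis_of_sets_def)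
  fix U assume "U \<in> \<U>"
  with assms have [measurable]: "U \<in> sets M" by (rule basis_of_setsD(1))
  show "(\<lambda>x. ennreal (1 / measure M U) * (\<integral>\<^sup>+ y. \<phi> y * indicator U y \<partial>M) * indicator U x)
      \<in> borel_measurable M"
    by measurable
qed

lemma maxop_nn_cong_AE: "AE x in M. \<phi> x = \<psi> x \<Longrightarrow> maxop_nn M \<U> \<phi> = maxop_nn M \<U> \<psi>"
proof -
  assume "AE x in M. \<phi> x = \<psi> x"
  then have "(\<integral>\<^sup>+ y. \<phi> y * indicator U y \<partial>M) = (\<integral>\<^sup>+ y. \<psi> y * indicator U y \<partial>M)" for U
    by (intro nn_integral_cong_AE) (auto elim: eventually_mono)
  then show ?thesis unfolding maxop_nn_def by simp
qed

lemma average_le_maxop_nn: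
  "U \<in> \<U> \<Longrightarrow> x \<in> U \<Longrightarrow>
    ennreal (1 / measure M U) * (\<integral>\<^sup>+ y. \<phi> y * indicator U y \<partial>M) \<le> maxop_nn M \<U> \<phi> x"
  unfolding maxop_nn_def by (intro SUP_upper2) auto

lemma maxop_nn_suminf_le:
  assumes [measurable]: "\<And>k. \<phi> k \<in> borel_measurable M" and B: "basis_of_sets M \<U>"
  shows "maxop_nn M \<U> (\<lambda>y. \<Sum>k. c k * \<phi> k y) x \<le> (\<Sum>k. c k * maxop_nn M \<U> (\<phi> k) x)"
  unfolding maxop_nn_def
proof (rule SUP_least)
  fix U assume U: "U \<in> \<U>"
  have [measurable]: "U \<in> sets M" using B U by (rule basis_of_setsD(1))
  have "(\<integral>\<^sup>+ y. (\<Sum>k. c k * \<phi> k y) * indicator U y \<partial>M) = (\<integral>\<^sup>+ y. (\<Sum>k. c k * \<phi> k y * indicator U y) \<partial>M)"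
    by simp
  also have "\<dots> = (\<Sum>k. (\<integral>\<^sup>+ y. c k * \<phi> k y * indicator U y \<partial>M))"
    by (rule nn_integral_suminf) measurable
  finally have "(\<integral>\<^sup>+ y. (\<Sum>k. c k * \<phi> k y) * indicator U y \<partial>M)
      = (\<Sum>k. c k * (\<integral>\<^sup>+ y. \<phi> k y * indicator U y \<partial>M))"
    by (simp add: nn_integral_cmult mult.assoc)
  then have "ennreal (1 / measure M U) * (\<integral>\<^sup>+ y. (\<Sum>k. c k * \<phi> k y) * indicator U y \<partial>M) * indicator U x
      = (\<Sum>k. c k * (ennreal (1 / measure M U) * (\<integral>\<^sup>+ y. \<phi> k y * indicator U y \<partial>M) * indicator U x))"
    by (simp add: ennreal_suminf_cmult[symmetric] ennreal_suminf_multc[symmetric] mult.assoc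
        mult.left_commute del: ennreal_suminf_cmult ennreal_suminf_multc)
  also have "\<dots> \<le> (\<Sum>k. c k * (SUP U\<in>\<U>. ennreal (1 / measure M U) * (\<integral>\<^sup>+ y. \<phi> k y * indicator U y \<partial>M) * indicator U x))"
    by (intro suminf_le summableI mult_left_mono SUP_upper U) simp
  finally show "ennreal (1 / measure M U) * (\<integral>\<^sup>+ y. (\<Sum>k. c k * \<phi> k y) * indicator U y \<partial>M) * indicator U x
      \<le> (\<Sum>k. c k * (SUP U\<in>\<U>. ennreal (1 / measure M U) * (\<integral>\<^sup>+ y. \<phi> k y * indicator U y \<partial>M) * indicator U x))" .
qed

lemma enn2real_in_Lpw:
  fixes \<phi> :: "'a \<Rightarrow> ennreal"
  assumes [measurable]: "\<phi> \<in> borel_measurable M" "a \<in> borel_measurable M"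
    and a_pos: "\<And>x. x \<in> space M \<Longrightarrow> 0 < a x" and "0 < t"
    and finite: "(\<integral>\<^sup>+x. epow (\<phi> x * ennreal (a x)) t \<partial>M) \<noteq> top"
  shows "(\<lambda>x. enn2real (\<phi> x)) \<in> Lpw M (ennreal t) a"
    and "wnorm M (ennreal t) a (\<lambda>x. enn2real (\<phi> x)) = epow (\<integral>\<^sup>+x. epow (\<phi> x * ennreal (a x)) t \<partial>M) (1 / t)"
    and "maxop M \<U> (\<lambda>x. enn2real (\<phi> x)) = maxop_nn M \<U> \<phi>"
proof -
  have "AE x in M. \<phi> x \<noteq> top"
    by (rule AE_finite_if_nn_integral_epow_finite[OF finite a_pos]) simp_all
  then have \<phi>_eq: "AE x in M. ennreal \<bar>enn2real (\<phi> x)\<bar> = \<phi> x"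
    by (elim eventually_mono) (simp add: ennreal_enn2real_if)
  have "(\<integral>\<^sup>+x. epow (ennreal (\<bar>enn2real (\<phi> x)\<bar> * a x)) t \<partial>M) = (\<integral>\<^sup>+x. epow (\<phi> x * ennreal (a x)) t \<partial>M)"
    using \<phi>_eq
  proof (intro nn_integral_cong_AE, elim AE_mp, intro AE_I2 impI)
    fix x assume "x \<in> space M" "ennreal \<bar>enn2real (\<phi> x)\<bar> = \<phi> x"
    then show "epow (ennreal (\<bar>enn2real (\<phi> x)\<bar> * a x)) t = epow (\<phi> x * ennreal (a x)) t"
      using a_pos[of x] by (simp add: ennreal_mult)
  qed
  then show "(\<lambda>x. enn2real (\<phi> x)) \<in> Lpw M (ennreal t) a"
    and "wnorm M (ennreal t) a (\<lambda>x. enn2real (\<phi> x)) = epow (\<integral>\<^sup>+x. epow (\<phi> x * ennreal (a x)) t \<partial>M) (1 / t)"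
    using finite \<open>0 < t\<close> by (auto simp: Lpw_iff_nn_integral wnorm_finite top.not_eq_extremum)
  show "maxop M \<U> (\<lambda>x. enn2real (\<phi> x)) = maxop_nn M \<U> \<phi>"
    unfolding maxop_eq_maxop_nn by (rule maxop_nn_cong_AE[OF \<phi>_eq])
qed

lemma maxop_bounded_nn_integral:
  assumes "0 < t" and bounded: "maxop_bounded M \<U> (ennreal t) a b"
    and [measurable]: "a \<in> borel_measurable M" and a_pos: "\<And>x. x \<in> space M \<Longrightarrow> 0 < a x"
  obtains C :: real where "C > 0" "\<And>\<phi>. \<phi> \<in> borel_measurable M \<Longrightarrow>
      (\<integral>\<^sup>+x. epow (\<phi> x * ennreal (a x)) t \<partial>M) \<noteq> top \<Longrightarrow>
      (\<integral>\<^sup>+x. epow (maxop_nn M \<U> \<phi> x * ennreal (b x)) t \<partial>M)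
        \<le> ennreal C * (\<integral>\<^sup>+x. epow (\<phi> x * ennreal (a x)) t \<partial>M)"
proof -
  from bounded obtain C0 :: real where C0: "\<And>f. f \<in> Lpw M (ennreal t) a \<Longrightarrow>
      Lnorm M (ennreal t) (space M) (\<lambda>x. maxop M \<U> f x * ennreal (b x)) \<le> ennreal C0 * wnorm M (ennreal t) a f"
    unfolding maxop_bounded_def by blast
  show ?thesis
  proof (rule that)
    show "max C0 0 powr t + 1 > 0" by (simp add: add_nonneg_pos)
    fix \<phi> :: "'a \<Rightarrow> ennreal"
    assume [measurable]: "\<phi> \<in> borel_measurable M"
      and finite: "(\<integral>\<^sup>+x. epow (\<phi> x * ennreal (a x)) t \<partial>M) \<noteq> top"
    define I where "I = (\<integral>\<^sup>+x. epow (\<phi> x * ennreal (a x)) t \<partial>M)"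
    note f = enn2real_in_Lpw[OF \<open>\<phi> \<in> borel_measurable M\<close> \<open>a \<in> borel_measurable M\<close> a_pos \<open>0 < t\<close> finite]
    have "(\<integral>\<^sup>+x. epow (maxop_nn M \<U> \<phi> x * ennreal (b x)) t * indicator (space M) x \<partial>M)
        = (\<integral>\<^sup>+x. epow (maxop_nn M \<U> \<phi> x * ennreal (b x)) t \<partial>M)"
      by (rule nn_integral_cong) simp
    then have "epow (\<integral>\<^sup>+x. epow (maxop_nn M \<U> \<phi> x * ennreal (b x)) t \<partial>M) (1 / t) \<le> ennreal C0 * epow I (1 / t)"
      using C0[OF f(1)] \<open>0 < t\<close> unfolding I_def by (simp add: Lnorm_finite f(2,3))
    then have "epow (epow (\<integral>\<^sup>+x. epow (maxop_nn M \<U> \<phi> x * ennreal (b x)) t \<partial>M) (1 / t)) t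
        \<le> epow (ennreal C0 * epow I (1 / t)) t"
      using \<open>0 < t\<close> by (intro epow_mono) auto
    then have "(\<integral>\<^sup>+x. epow (maxop_nn M \<U> \<phi> x * ennreal (b x)) t \<partial>M) \<le> epow (ennreal C0) t * I"
      using \<open>0 < t\<close> by (simp add: epow_epow epow_mult)
    also have "epow (ennreal C0) t = ennreal (max C0 0 powr t)"
      by (cases "0 \<le> C0") (simp_all add: epow_ennreal ennreal_neg \<open>0 < t\<close>)
    also have "\<dots> \<le> ennreal (max C0 0 powr t + 1)" by (intro ennreal_leI) simp
    finally show "(\<integral>\<^sup>+x. epow (maxop_nn M \<U> \<phi> x * ennreal (b x)) t \<partial>M)
        \<le> ennreal (max C0 0 powr t + 1) * (\<integral>\<^sup>+x. epow (\<phi> x * ennreal (a x)) t \<partial>M)"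
      unfolding I_def by (simp add: mult_right_mono)
  qed
qed

section \<open>The Rubio de Francia iteration\<close>

lemma power_powr_swap: "0 < x \<Longrightarrow> (x ^ n) powr t = (x powr t) ^ n" for x :: real
  by (simp add: powr_power powr_powr mult.commute flip: powr_realpow)

lemma ennreal_le_suminf: "f n \<le> (\<Sum>i. f i :: ennreal)"
  using sum_le_suminf[OF summableI, of "{n}" f] by simp

text \<open>A substitute for the triangle inequality of \<open>x \<mapsto> x\<^sup>t\<close> that also holds for \<open>t < 1\<close>.\<close>

lemma epow_suminf_le:
  assumes t: "0 < t"
  shows "epow (\<Sum>k. f k) t \<le> (\<Sum>k. epow (ennreal (2 ^ Suc k) * f k) t)"
proof -
  define Y where "Y = epow (\<Sum>k. epow (ennreal (2 ^ Suc k) * f k) t) (1 / t)"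
  have Y: "epow Y t = (\<Sum>k. epow (ennreal (2 ^ Suc k) * f k) t)"
    unfolding Y_def using t by (simp add: epow_epow)
  have "f k \<le> ennreal ((1/2) ^ Suc k) * Y" for k
  proof -
    have "epow (ennreal (2 ^ Suc k) * f k) t \<le> epow Y t"
      unfolding Y by (rule ennreal_le_suminf)
    then have le: "ennreal (2 ^ Suc k) * f k \<le> Y" using epow_le_iff[OF t] by blast
    have "f k = ennreal ((1/2) ^ Suc k) * (ennreal (2 ^ Suc k) * f k)"
      by (simp add: mult.assoc[symmetric] ennreal_mult[symmetric] power_mult_distrib[symmetric] del: ennreal_plus)
    also have "\<dots> \<le> ennreal ((1/2) ^ Suc k) * Y" by (rule mult_left_mono[OF le]) simp
    finally show ?thesis .
  qed
  then have "(\<Sum>k. f k) \<le> (\<Sum>k. ennreal ((1/2) ^ Suc k) * Y)"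
    by (intro suminf_le summableI)
  also have "\<dots> = (\<Sum>k. ennreal ((1/2) ^ Suc k)) * Y"
    by (rule ennreal_suminf_multc)
  also have "(\<Sum>k. ennreal ((1/2::real) ^ Suc k)) = 1"
    using power_half_series by (subst suminf_ennreal2) (auto simp: sums_iff)
  finally show ?thesis
    unfolding Y[symmetric] using t by (intro epow_mono) auto
qed

lemma geometric_coefficient_powr:
  fixes t C :: real
  assumes t: "0 < t" and C: "0 < C"
  shows "((2::real) ^ Suc k * (1 / (2 * (2 * C) powr (1 / t))) ^ k) powr t * C ^ k = 2 powr t * (1/2) ^ k"
proof -
  define L A where "L = 2 * (2 * C) powr (1 / t)" and "A = (2::real) powr t"
  have L: "0 < L" using C by (simp add: L_def)
  have Lt: "L powr t = A * (2 * C)"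
    unfolding L_def A_def using C t by (simp add: powr_mult powr_powr)
  have "((2::real) ^ Suc k * (1 / L) ^ k) powr t = A ^ Suc k * ((1 / L) powr t) ^ k"
    unfolding A_def using L by (simp add: powr_mult power_powr_swap del: power_Suc)
  also have "(1 / L) powr t = 1 / (A * (2 * C))" using L by (simp add: powr_divide Lt)
  finally have e1: "((2::real) ^ Suc k * (1 / L) ^ k) powr t = A ^ Suc k * (1 / (A * (2 * C))) ^ k" .
  have "A ^ Suc k * (1 / (A * (2 * C))) ^ k * C ^ k = A * (A * (1 / (A * (2 * C))) * C) ^ k"
    unfolding power_mult_distrib power_Suc by (simp add: ac_simps)
  then have "((2::real) ^ Suc k * (1 / L) ^ k) powr t * C ^ k = A * (A * (1 / (A * (2 * C))) * C) ^ k"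
    unfolding e1 .
  also have "A * (1 / (A * (2 * C))) * C = 1 / 2" using C by (simp add: A_def field_simps)
  finally show ?thesis unfolding L_def A_def .
qed

lemma nn_integral_epow_geometric_suminf_le:
  fixes a :: "'a \<Rightarrow> ennreal"
  assumes t: "0 < t" and C: "0 < C" and [measurable]: "\<And>k. h k \<in> borel_measurable M" "a \<in> borel_measurable M"
    and h: "\<And>k. (\<integral>\<^sup>+x. epow (h k x * a x) t \<partial>M) \<le> ennreal (C ^ k) * I"
  defines "L \<equiv> 2 * (2 * C) powr (1 / t)"
  shows "(\<integral>\<^sup>+x. epow ((\<Sum>k. ennreal ((1 / L) ^ k) * h k x) * a x) t \<partial>M) \<le> ennreal (2 * 2 powr t) * I"
proof -
  define A :: real where "A = 2 powr t"
  have L: "0 < L" unfolding L_def using C by simp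
  have coeff: "((2::real) ^ Suc k * (1 / L) ^ k) powr t * C ^ k = A * (1/2) ^ k" for k
    unfolding L_def A_def using t C by (rule geometric_coefficient_powr)
  have "(\<integral>\<^sup>+x. epow ((\<Sum>k. ennreal ((1 / L) ^ k) * h k x) * a x) t \<partial>M)
      \<le> (\<integral>\<^sup>+x. (\<Sum>k. ennreal (((2::real) ^ Suc k * (1 / L) ^ k) powr t) * epow (h k x * a x) t) \<partial>M)"
  proof (rule nn_integral_mono)
    fix x
    have "epow ((\<Sum>k. ennreal ((1 / L) ^ k) * h k x) * a x) t
        = epow (\<Sum>k. ennreal ((1 / L) ^ k) * h k x * a x) t"
      by simp
    also have "\<dots> \<le> (\<Sum>k. epow (ennreal (2 ^ Suc k) * (ennreal ((1 / L) ^ k) * h k x * a x)) t)"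
      by (rule epow_suminf_le[OF t])
    also have "\<dots> = (\<Sum>k. ennreal (((2::real) ^ Suc k * (1 / L) ^ k) powr t) * epow (h k x * a x) t)"
    proof (rule suminf_cong)
      fix k
      have "ennreal (2 ^ Suc k) * (ennreal ((1 / L) ^ k) * h k x * a x)
          = ennreal ((2::real) ^ Suc k * (1 / L) ^ k) * (h k x * a x)"
        using L by (simp add: ennreal_mult mult.assoc del: power_Suc)
      then show "epow (ennreal (2 ^ Suc k) * (ennreal ((1 / L) ^ k) * h k x * a x)) t
          = ennreal (((2::real) ^ Suc k * (1 / L) ^ k) powr t) * epow (h k x * a x) t"
        using t L by (simp add: epow_mult epow_ennreal del: power_Suc)
    qed
    finally show "epow ((\<Sum>k. ennreal ((1 / L) ^ k) * h k x) * a x) t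
        \<le> (\<Sum>k. ennreal (((2::real) ^ Suc k * (1 / L) ^ k) powr t) * epow (h k x * a x) t)" .
  qed
  also have "\<dots> = (\<Sum>k. ennreal (((2::real) ^ Suc k * (1 / L) ^ k) powr t) * (\<integral>\<^sup>+x. epow (h k x * a x) t \<partial>M))"
    by (subst nn_integral_suminf) (auto simp: nn_integral_cmult)
  also have "\<dots> \<le> (\<Sum>k. ennreal (((2::real) ^ Suc k * (1 / L) ^ k) powr t) * (ennreal (C ^ k) * I))"
    by (intro suminf_le summableI mult_left_mono h) simp
  also have "\<dots> = (\<Sum>k. ennreal (A * (1/2) ^ k) * I)"
    by (rule suminf_cong)
      (use C in \<open>simp add: mult.assoc[symmetric] ennreal_mult[symmetric] coeff del: ennreal_plus power_Suc\<close>)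
  also have "\<dots> = (\<Sum>k. ennreal (A * (1/2) ^ k)) * I"
    by (rule ennreal_suminf_multc)
  also have "(\<Sum>k. ennreal (A * (1/2) ^ k)) = ennreal (2 * 2 powr t)"
  proof -
    have "(\<lambda>k. A * (1/2) ^ k) sums (A * 2)"
      using sums_mult[OF geometric_sums[of "1/2::real"], of A] by simp
    then have "(\<Sum>k. ennreal (A * (1/2) ^ k)) = ennreal (A * 2)"
      using A_def by (simp add: suminf_ennreal2 sums_iff)
    then show ?thesis unfolding A_def by (simp add: mult.commute)
  qed
  finally show ?thesis .
qed

lemma nn_integral_epow_funpow_le:
  fixes T :: "('a \<Rightarrow> ennreal) \<Rightarrow> 'a \<Rightarrow> ennreal" and a g :: "'a \<Rightarrow> ennreal"
  assumes C: "0 \<le> C"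
    and T_measurable: "\<And>\<phi>. \<phi> \<in> borel_measurable M \<Longrightarrow> T \<phi> \<in> borel_measurable M"
    and T_bounded: "\<And>\<phi>. \<phi> \<in> borel_measurable M \<Longrightarrow> (\<integral>\<^sup>+x. epow (\<phi> x * a x) t \<partial>M) \<noteq> top \<Longrightarrow>
      (\<integral>\<^sup>+x. epow (T \<phi> x * a x) t \<partial>M) \<le> ennreal C * (\<integral>\<^sup>+x. epow (\<phi> x * a x) t \<partial>M)"
    and g: "g \<in> borel_measurable M" and g_finite: "(\<integral>\<^sup>+x. epow (g x * a x) t \<partial>M) \<noteq> top"
  shows "(\<integral>\<^sup>+x. epow ((T ^^ k) g x * a x) t \<partial>M) \<le> ennreal (C ^ k) * (\<integral>\<^sup>+x. epow (g x * a x) t \<partial>M)"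
proof (induction k)
  case (Suc k)
  have "(T ^^ k) g \<in> borel_measurable M" by (induction k) (simp_all add: g T_measurable)
  moreover have "(\<integral>\<^sup>+x. epow ((T ^^ k) g x * a x) t \<partial>M) \<noteq> top"
    using Suc.IH g_finite by (metis ennreal_mult_eq_top_iff ennreal_neq_top neq_top_trans)
  ultimately have "(\<integral>\<^sup>+x. epow ((T ^^ Suc k) g x * a x) t \<partial>M)
      \<le> ennreal C * (\<integral>\<^sup>+x. epow ((T ^^ k) g x * a x) t \<partial>M)"
    by (simp add: T_bounded)
  also have "\<dots> \<le> ennreal C * (ennreal (C ^ k) * (\<integral>\<^sup>+x. epow (g x * a x) t \<partial>M))"
    by (rule mult_left_mono[OF Suc.IH]) simp
  finally show ?case using C by (simp add: ennreal_mult mult.assoc)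
qed simp

lemma Rubio_de_Francia_iteration:
  fixes T :: "('a \<Rightarrow> ennreal) \<Rightarrow> 'a \<Rightarrow> ennreal" and a g :: "'a \<Rightarrow> ennreal"
  assumes t: "0 < t" and C: "0 < C"
    and T_measurable: "\<And>\<phi>. \<phi> \<in> borel_measurable M \<Longrightarrow> T \<phi> \<in> borel_measurable M"
    and T_suminf_le: "\<And>c \<phi> x. (\<And>k. \<phi> k \<in> borel_measurable M) \<Longrightarrow>
      T (\<lambda>y. \<Sum>k. c k * \<phi> k y) x \<le> (\<Sum>k. c k * T (\<phi> k) x)"
    and T_bounded: "\<And>\<phi>. \<phi> \<in> borel_measurable M \<Longrightarrow> (\<integral>\<^sup>+x. epow (\<phi> x * a x) t \<partial>M) \<noteq> top \<Longrightarrow>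
      (\<integral>\<^sup>+x. epow (T \<phi> x * a x) t \<partial>M) \<le> ennreal C * (\<integral>\<^sup>+x. epow (\<phi> x * a x) t \<partial>M)"
    and [measurable]: "g \<in> borel_measurable M" "a \<in> borel_measurable M"
    and g_finite: "(\<integral>\<^sup>+x. epow (g x * a x) t \<partial>M) \<noteq> top"
  obtains \<Phi> L where "\<Phi> \<in> borel_measurable M" "\<And>x. g x \<le> \<Phi> x"
    "(\<integral>\<^sup>+x. epow (\<Phi> x * a x) t \<partial>M) \<noteq> top" "0 < L" "\<And>x. T \<Phi> x \<le> ennreal L * \<Phi> x"
proof -
  define h where "h k = (T ^^ k) g" for k
  have h_Suc: "h (Suc k) = T (h k)" for k by (simp add: h_def)
  have h_measurable [measurable]: "h k \<in> borel_measurable M" for k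
    by (induction k) (simp_all add: h_def T_measurable)
  define I where "I = (\<integral>\<^sup>+x. epow (g x * a x) t \<partial>M)"
  have h_bound: "(\<integral>\<^sup>+x. epow (h k x * a x) t \<partial>M) \<le> ennreal (C ^ k) * I" for k
    unfolding h_def I_def using C T_measurable T_bounded g_finite by (intro nn_integral_epow_funpow_le) auto
  define L where "L = 2 * (2 * C) powr (1 / t)"
  define \<Phi> where "\<Phi> x = (\<Sum>k. ennreal ((1 / L) ^ k) * h k x)" for x
  have L: "0 < L" unfolding L_def using C by simp
  have \<Phi>_measurable [measurable]: "\<Phi> \<in> borel_measurable M" unfolding \<Phi>_def[abs_def] by measurable
  have g_le_\<Phi>: "g x \<le> \<Phi> x" for x
    using ennreal_le_suminf[of "\<lambda>k. ennreal ((1 / L) ^ k) * h k x" 0] by (simp add: \<Phi>_def h_def)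
  have "(\<integral>\<^sup>+x. epow (\<Phi> x * a x) t \<partial>M) \<le> ennreal (2 * 2 powr t) * I"
    unfolding \<Phi>_def L_def using t C h_bound by (intro nn_integral_epow_geometric_suminf_le) auto
  then have \<Phi>_finite: "(\<integral>\<^sup>+x. epow (\<Phi> x * a x) t \<partial>M) \<noteq> top"
    using g_finite unfolding I_def by (auto simp: ennreal_mult_eq_top_iff top_unique)
  have "T \<Phi> x \<le> ennreal L * \<Phi> x" for x
  proof -
    have "T \<Phi> x \<le> (\<Sum>k. ennreal ((1 / L) ^ k) * h (Suc k) x)"
      unfolding \<Phi>_def h_Suc by (rule T_suminf_le) simp
    also have "\<dots> = ennreal L * (\<Sum>k. ennreal ((1 / L) ^ Suc k) * h (Suc k) x)"
    proof -
      have "ennreal ((1 / L) ^ k) * h (Suc k) x = ennreal L * (ennreal ((1 / L) ^ Suc k) * h (Suc k) x)" for k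
        using L by (simp add: mult.assoc[symmetric] ennreal_mult[symmetric] del: ennreal_plus)
      then show ?thesis by simp
    qed
    also have "\<dots> \<le> ennreal L * \<Phi> x"
      using suminf_offset[of "\<lambda>k. ennreal ((1 / L) ^ k) * h k x" 1]
      by (intro mult_left_mono) (simp_all add: \<Phi>_def)
    finally show ?thesis .
  qed
  with that \<Phi>_measurable g_le_\<Phi> \<Phi>_finite L show ?thesis by blast
qed

section \<open>Rescaled weights\<close>

text \<open>The exponents of the case \<open>1/\<gamma> > 0\<close>, with \<open>e = 1/\<gamma>\<close>; the case \<open>1/\<gamma> < 0\<close> is the instance
  \<open>(r, s, r\<^sub>0, s\<^sub>0, -1/\<gamma>)\<close>. The exponent \<open>q = S/\<gamma>\<close> is the power of the factor \<open>\<Psi>\<close>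
  by which the weights are rescaled.\<close>

locale rescaled_exponents =
  fixes S R S0 R0 :: ennreal and e :: real
  assumes pos: "0 < S" "0 < R" "0 < S0" "0 < R0" and e_pos: "0 < e"
    and rcp_S_S0: "rcp S - rcp S0 = e" and rcp_R0_R: "rcp R0 - rcp R = e"
begin

abbreviation \<alpha> where "\<alpha> \<equiv> alpha_exp S0 R0"

abbreviation q where "q \<equiv> enn2real S * e"

lemma S_finite: "S \<noteq> top"
  using rcp_S_S0 e_pos rcp_nonneg[of S0] by (intro finite_if_rcp_pos) linarith

lemma R0_finite: "R0 \<noteq> top"
  using rcp_R0_R e_pos rcp_nonneg[of R] by (intro finite_if_rcp_pos) linarith

lemma S_real_pos: "0 < enn2real S"
  using S_finite pos by (simp add: enn2real_pos)

lemma rcp_S: "rcp S = 1 / enn2real S"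
  using rcp_finite[OF pos(1) S_finite] .

lemma rcp_S0_R0: "rcp S0 + rcp R0 = 1 / \<alpha>"
  using rcp_R0_R e_pos rcp_nonneg[of S0] rcp_nonneg[of R] by (simp add: alpha_exp_def)

lemma rcp_S_R: "rcp S + rcp R = 1 / \<alpha>"
  using rcp_S0_R0 rcp_S_S0 rcp_R0_R by simp

lemma alpha_pos: "0 < \<alpha>"
  using rcp_R0_R e_pos rcp_nonneg[of S0] rcp_nonneg[of R] by (simp add: alpha_exp_def)

lemma one_minus_q: "1 - q = enn2real S * rcp S0"
  using rcp_S_S0 S_real_pos by (simp add: rcp_S field_simps)

lemma q_pos: "0 < q"
  using S_real_pos e_pos by simp

lemma q_le_1: "q \<le> 1"
  using one_minus_q mult_nonneg_nonneg[OF enn2real_nonneg rcp_nonneg, of S S0] by linarith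

lemma q_eq_1_iff: "q = 1 \<longleftrightarrow> S0 = top"
  using one_minus_q S_real_pos rcp_eq_0_iff[OF pos(3)] by auto

lemma S0_mult: "q < 1 \<Longrightarrow> S0 * ennreal (1 - q) = S"
proof -
  assume "q < 1"
  then have S0: "S0 \<noteq> top" using q_eq_1_iff by auto
  then have "enn2real S0 * (1 - q) = enn2real S"
    using one_minus_q rcp_finite[OF pos(3) S0] enn2real_pos[OF pos(3) S0] by simp
  then have "ennreal (enn2real S0) * ennreal (1 - q) = ennreal (enn2real S)"
    using \<open>q < 1\<close> by (simp flip: ennreal_mult)
  then show ?thesis using S0 S_finite by (simp add: ennreal_enn2real_if)
qed

lemma R0_eq_alpha: "q = 1 \<Longrightarrow> R0 = ennreal \<alpha>"
proof -
  assume "q = 1"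
  then have "rcp R0 = 1 / \<alpha>" using rcp_S0_R0 q_eq_1_iff by simp
  then have "enn2real R0 = \<alpha>"
    using rcp_finite[OF pos(4) R0_finite] enn2real_pos[OF pos(4) R0_finite] alpha_pos by simp
  then show ?thesis using R0_finite by (metis ennreal_enn2real_if)
qed

lemma rcp_R0_split: "rcp R0 = (1 - q) * rcp R + q / \<alpha>"
proof -
  have "q * rcp S = e" using S_real_pos by (simp add: rcp_S)
  moreover have "q / \<alpha> = q * (rcp S + rcp R)" using rcp_S_R by simp
  ultimately show ?thesis using rcp_R0_R by (simp add: algebra_simps)
qed

end

lemma (in rescaled_exponents) Lnorm_rescaled_weight_le:
  assumes [measurable]: "U \<in> sets M" "W \<in> borel_measurable M" "\<Psi> \<in> borel_measurable M"
    and W_pos: "\<And>x. x \<in> space M \<Longrightarrow> 0 < W x" and c: "0 < c"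
    and lower: "AE x in M. x \<in> U \<longrightarrow> c * W x \<le> \<Psi> x"
  shows "Lnorm M S0 U (\<lambda>x. ennreal (W x * \<Psi> x powr -q))
    \<le> ennreal (c powr -q) * (if q < 1 then epow (Lnorm M S U (\<lambda>x. ennreal (W x))) (1 - q) else 1)"
proof -
  have pointwise: "W x * \<Psi> x powr -q \<le> c powr -q * W x powr (1 - q)"
    if x: "x \<in> space M" and le: "c * W x \<le> \<Psi> x" for x
  proof -
    have "\<Psi> x powr -q \<le> (c * W x) powr -q"
      using le c W_pos[OF x] q_pos by (intro powr_mono2') auto
    then have "W x * \<Psi> x powr -q \<le> W x * (c powr -q * W x powr -q)"
      using W_pos[OF x] by (simp add: powr_mult)
    also have "\<dots> = c powr -q * W x powr (1 - q)"
      using W_pos[OF x] by (simp add: powr_diff powr_minus field_simps)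
    finally show ?thesis .
  qed
  show ?thesis
  proof (cases "q < 1")
    case True
    have "Lnorm M S0 U (\<lambda>x. ennreal (W x * \<Psi> x powr -q))
        \<le> Lnorm M S0 U (\<lambda>x. ennreal (c powr -q) * epow (ennreal (W x)) (1 - q))"
    proof (rule Lnorm_mono)
      show "AE x in M. x \<in> U \<longrightarrow>
          ennreal (W x * \<Psi> x powr -q) \<le> ennreal (c powr -q) * epow (ennreal (W x)) (1 - q)"
        using lower
      proof (elim AE_mp, intro AE_I2 impI)
        fix x assume "x \<in> space M" "x \<in> U \<longrightarrow> c * W x \<le> \<Psi> x" "x \<in> U"
        then show "ennreal (W x * \<Psi> x powr -q) \<le> ennreal (c powr -q) * epow (ennreal (W x)) (1 - q)"
          using pointwise[of x] W_pos[of x] by (simp add: epow_ennreal ennreal_leI flip: ennreal_mult)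
      qed
    qed (use pos in auto)
    also have "\<dots> \<le> ennreal (c powr -q) * Lnorm M S0 U (\<lambda>x. epow (ennreal (W x)) (1 - q))"
      using pos by (intro Lnorm_cmult_le) auto
    also have "\<dots> \<le> ennreal (c powr -q) * epow (Lnorm M (S0 * ennreal (1 - q)) U (\<lambda>x. ennreal (W x))) (1 - q)"
      using pos True by (intro mult_left_mono Lnorm_epow_le) auto
    finally show ?thesis using True S0_mult by simp
  next
    case False
    then have "q = 1" "S0 = top" using q_le_1 q_eq_1_iff by auto
    have "AE x in M. ennreal (W x * \<Psi> x powr -q) * indicator U x \<le> ennreal (c powr -q)"
      using lower
    proof (elim AE_mp, intro AE_I2 impI)
      fix x assume "x \<in> space M" "x \<in> U \<longrightarrow> c * W x \<le> \<Psi> x"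
      then show "ennreal (W x * \<Psi> x powr -q) * indicator U x \<le> ennreal (c powr -q)"
        using pointwise[of x] W_pos[of x] \<open>q = 1\<close> by (auto simp: indicator_def intro: ennreal_leI)
    qed
    then show ?thesis unfolding \<open>S0 = top\<close> Lnorm_top using False
      by (simp add: esssup_le_iff)
  qed
qed

lemma rescaled_dual_weight_eq:
  fixes \<Phi> V \<alpha> q :: real
  assumes "0 < \<Phi>" "0 < V" "0 < \<alpha>"
  shows "1 / (V * (\<Phi> powr (1/\<alpha>) * V) powr -q) = (1 / V) powr (1 - q) * \<Phi> powr (q / \<alpha>)"
proof -
  have "(\<Phi> powr (1/\<alpha>) * V) powr -q = \<Phi> powr -(q/\<alpha>) * V powr -q"
    using assms by (simp add: powr_mult powr_powr)
  then have "1 / (V * (\<Phi> powr (1/\<alpha>) * V) powr -q) = \<Phi> powr (q/\<alpha>) * (1 / (V * V powr -q))"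
    using assms by (simp add: powr_minus field_simps)
  moreover have "1 / (V * V powr -q) = (1 / V) powr (1 - q)"
    using assms by (simp add: powr_divide powr_diff powr_minus field_simps)
  ultimately show ?thesis by simp
qed

lemma Lnorm_Holder_epow:
  assumes [measurable]: "f \<in> borel_measurable M" "g \<in> borel_measurable M" "A \<in> sets M"
    and \<theta>: "0 < \<theta>" "\<theta> < 1" and \<beta>: "0 < \<beta>" and p: "0 < p" "0 < p0" "p0 \<noteq> top"
    and rcp: "rcp p0 = (1 - \<theta>) * rcp p + \<theta> / \<beta>" and finite: "Lnorm M p A f \<noteq> top"
  shows "Lnorm M p0 A (\<lambda>x. epow (f x) (1 - \<theta>) * epow (g x) (\<theta> / \<beta>))
    \<le> epow (Lnorm M p A f) (1 - \<theta>) * epow (Lnorm M 1 A g) (\<theta> / \<beta>)"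
proof -
  define \<rho> where "\<rho> = (if p = top then top else ennreal (enn2real p / (1 - \<theta>)))"
  have \<rho>: "0 < \<rho>" "\<rho> * ennreal (1 - \<theta>) = p" "rcp \<rho> = (1 - \<theta>) * rcp p"
    using \<theta> p by (auto simp: \<rho>_def enn2real_pos rcp_ennreal rcp_finite ennreal_enn2real_if
        simp flip: ennreal_mult)
  have \<beta>': "0 < ennreal (\<beta> / \<theta>)" "ennreal (\<beta> / \<theta>) \<noteq> top" "rcp (ennreal (\<beta> / \<theta>)) = \<theta> / \<beta>"
    "ennreal (\<beta> / \<theta>) * ennreal (\<theta> / \<beta>) = 1"
    using \<theta> \<beta> by (auto simp: rcp_ennreal simp flip: ennreal_mult)
  have f: "Lnorm M \<rho> A (\<lambda>x. epow (f x) (1 - \<theta>)) \<le> epow (Lnorm M p A f) (1 - \<theta>)"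
    using Lnorm_epow_le[of f M A \<rho> "1 - \<theta>"] \<rho> \<theta> by simp
  have "Lnorm M p0 A (\<lambda>x. epow (f x) (1 - \<theta>) * epow (g x) (\<theta> / \<beta>))
      \<le> Lnorm M \<rho> A (\<lambda>x. epow (f x) (1 - \<theta>)) * Lnorm M (ennreal (\<beta> / \<theta>)) A (\<lambda>x. epow (g x) (\<theta> / \<beta>))"
  proof (rule Lnorm_Holder)
    show "rcp p0 = rcp \<rho> + rcp (ennreal (\<beta> / \<theta>))" using \<rho> \<beta>' rcp by simp
    show "Lnorm M \<rho> A (\<lambda>x. epow (f x) (1 - \<theta>)) \<noteq> top" using f finite by (auto simp: top_unique)
  qed (use p \<rho> \<beta>' in auto)
  also have "\<dots> \<le> epow (Lnorm M p A f) (1 - \<theta>) * epow (Lnorm M 1 A g) (\<theta> / \<beta>)"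
    using Lnorm_epow_le[of g M A "ennreal (\<beta> / \<theta>)" "\<theta> / \<beta>"] \<beta>' \<theta> \<beta> by (intro mult_mono f) auto
  finally show ?thesis .
qed

lemma (in rescaled_exponents) Lnorm_rescaled_dual_weight_le:
  assumes [measurable]: "U \<in> sets M" "V \<in> borel_measurable M" "\<Phi> \<in> borel_measurable M"
    and V_pos: "\<And>x. x \<in> space M \<Longrightarrow> 0 < V x" and \<Phi>_pos: "\<And>x. x \<in> space M \<Longrightarrow> 0 < \<Phi> x"
    and finite: "Lnorm M R U (\<lambda>x. ennreal (1 / V x)) \<noteq> top"
  shows "Lnorm M R0 U (\<lambda>x. ennreal (1 / (V x * (\<Phi> x powr (1/\<alpha>) * V x) powr -q)))
    \<le> (if q < 1 then epow (Lnorm M R U (\<lambda>x. ennreal (1 / V x))) (1 - q) else 1)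
      * epow (\<integral>\<^sup>+x. ennreal (\<Phi> x) * indicator U x \<partial>M) (q / \<alpha>)"
proof -
  have "Lnorm M R0 U (\<lambda>x. ennreal (1 / (V x * (\<Phi> x powr (1/\<alpha>) * V x) powr -q)))
      = Lnorm M R0 U (\<lambda>x. epow (ennreal (1 / V x)) (1 - q) * epow (ennreal (\<Phi> x)) (q / \<alpha>))"
  proof (rule Lnorm_cong)
    fix x assume "x \<in> space M"
    then have "0 < V x" "0 < \<Phi> x" using V_pos \<Phi>_pos by auto
    then show "ennreal (1 / (V x * (\<Phi> x powr (1/\<alpha>) * V x) powr -q))
        = epow (ennreal (1 / V x)) (1 - q) * epow (ennreal (\<Phi> x)) (q / \<alpha>)"
      using alpha_pos by (simp add: rescaled_dual_weight_eq epow_ennreal ennreal_mult)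
  qed (use pos in auto)
  also have "\<dots> \<le> (if q < 1 then epow (Lnorm M R U (\<lambda>x. ennreal (1 / V x))) (1 - q) else 1)
      * epow (\<integral>\<^sup>+x. ennreal (\<Phi> x) * indicator U x \<partial>M) (q / \<alpha>)"
  proof (cases "q < 1")
    case True
    then show ?thesis
      using Lnorm_Holder_epow[of "\<lambda>x. ennreal (1 / V x)" M "\<lambda>x. ennreal (\<Phi> x)" U q \<alpha> R R0]
        q_pos alpha_pos pos R0_finite rcp_R0_split finite by (simp add: Lnorm_one)
  next
    case False
    then have "q = 1" using q_le_1 by simp
    have "Lnorm M R0 U (\<lambda>x. epow (ennreal (1 / V x)) (1 - q) * epow (ennreal (\<Phi> x)) (q / \<alpha>))
        = Lnorm M R0 U (\<lambda>x. epow (ennreal (\<Phi> x)) (1 / \<alpha>))"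
    proof (rule Lnorm_cong)
      fix x assume "x \<in> space M"
      then have "epow (ennreal (1 / V x)) 0 = 1" using V_pos[of x] by (simp add: epow_ennreal)
      then show "epow (ennreal (1 / V x)) (1 - q) * epow (ennreal (\<Phi> x)) (q / \<alpha>)
          = epow (ennreal (\<Phi> x)) (1 / \<alpha>)" using \<open>q = 1\<close> by simp
    qed (use pos in auto)
    also have "\<dots> \<le> epow (Lnorm M (R0 * ennreal (1 / \<alpha>)) U (\<lambda>x. ennreal (\<Phi> x))) (1 / \<alpha>)"
      using pos alpha_pos by (intro Lnorm_epow_le) auto
    also have "R0 * ennreal (1 / \<alpha>) = 1"
    proof -
      have "ennreal \<alpha> * ennreal (1 / \<alpha>) = 1" using alpha_pos by (simp flip: ennreal_mult)
      then show ?thesis using R0_eq_alpha \<open>q = 1\<close> by metis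
    qed
    finally show ?thesis using False \<open>q = 1\<close> by (simp add: Lnorm_one)
  qed
  finally show ?thesis .
qed

lemma rescaling_constant_eq:
  fixes m A L \<alpha> q :: real
  assumes "0 < m" "0 < A" "0 < L" "0 < \<alpha>"
  shows "m powr -(1/\<alpha>) * ((A / L) powr (1/\<alpha>)) powr -q * (A * m) powr (q/\<alpha>)
       = L powr (q/\<alpha>) * (m powr -(1/\<alpha>)) powr (1 - q)"
proof -
  have "((A / L) powr (1/\<alpha>)) powr -q = (A / L) powr -(q/\<alpha>)"
    by (simp add: powr_powr)
  also have "\<dots> = A powr -(q/\<alpha>) / L powr -(q/\<alpha>)" by (rule powr_divide)
  also have "L powr -(q/\<alpha>) = inverse (L powr (q/\<alpha>))" by (rule powr_minus)
  finally have "((A / L) powr (1/\<alpha>)) powr -q = A powr -(q/\<alpha>) * L powr (q/\<alpha>)"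
    by (simp add: divide_inverse)
  moreover have "(A * m) powr (q/\<alpha>) = A powr (q/\<alpha>) * m powr (q/\<alpha>)"
    using assms by (simp add: powr_mult)
  moreover have "(m powr -(1/\<alpha>)) powr (1 - q) = m powr -(1/\<alpha>) * m powr (q/\<alpha>)"
  proof -
    have "-(1/\<alpha>) * (1 - q) = -(1/\<alpha>) + q/\<alpha>" using assms by (simp add: field_simps)
    then show ?thesis by (simp add: powr_powr flip: powr_add)
  qed
  moreover have "A powr -(q/\<alpha>) * A powr (q/\<alpha>) = 1"
    using assms by (simp flip: powr_add)
  ultimately show ?thesis by (simp add: algebra_simps)
qed

lemma (in rescaled_exponents) rescaled_cube_constant_le:
  fixes W V \<Phi> :: "'a \<Rightarrow> real"
  assumes [measurable]: "U \<in> sets M" "W \<in> borel_measurable M" "V \<in> borel_measurable M" "\<Phi> \<in> borel_measurable M"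
    and m: "0 < measure M U"
    and W_pos: "\<And>x. x \<in> space M \<Longrightarrow> 0 < W x" and V_pos: "\<And>x. x \<in> space M \<Longrightarrow> 0 < V x"
    and \<Phi>_pos: "\<And>x. x \<in> space M \<Longrightarrow> 0 < \<Phi> x"
    and L: "0 < L" and A: "0 < A"
    and average: "(\<integral>\<^sup>+x. ennreal (\<Phi> x) * indicator U x \<partial>M) = ennreal (A * measure M U)"
    and A1: "AE x in M. x \<in> U \<longrightarrow> A * (W x / V x) powr \<alpha> \<le> L * \<Phi> x"
    and finite: "Lnorm M R U (\<lambda>x. ennreal (1 / V x)) \<noteq> top"
  defines "\<Psi> \<equiv> \<lambda>x. \<Phi> x powr (1/\<alpha>) * V x"
  shows "ennreal (measure M U powr -(rcp S0 + rcp R0)) * Lnorm M S0 U (\<lambda>x. ennreal (W x * \<Psi> x powr -q))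
      * Lnorm M R0 U (\<lambda>x. ennreal (1 / (V x * \<Psi> x powr -q)))
    \<le> ennreal (L powr (q/\<alpha>)) * (if q < 1 then epow (ennreal (measure M U powr -(rcp S + rcp R))
      * Lnorm M S U (\<lambda>x. ennreal (W x)) * Lnorm M R U (\<lambda>x. ennreal (1 / V x))) (1 - q) else 1)"
proof -
  define c where "c = (A / L) powr (1/\<alpha>)"
  define m' where "m' = measure M U powr -(1/\<alpha>)"
  define X where "X = (if q < 1 then epow (Lnorm M S U (\<lambda>x. ennreal (W x))) (1 - q) else 1)"
  define Y where "Y = (if q < 1 then epow (Lnorm M R U (\<lambda>x. ennreal (1 / V x))) (1 - q) else 1)"
  have "AE x in M. x \<in> U \<longrightarrow> c * W x \<le> \<Psi> x"
    using A1
  proof (elim AE_mp, intro AE_I2 impI)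
    fix x assume x: "x \<in> space M" and "x \<in> U \<longrightarrow> A * (W x / V x) powr \<alpha> \<le> L * \<Phi> x" "x \<in> U"
    then have "(A / L) * (W x / V x) powr \<alpha> \<le> \<Phi> x"
      using L by (simp add: field_simps)
    then have "((A / L) * (W x / V x) powr \<alpha>) powr (1/\<alpha>) \<le> \<Phi> x powr (1/\<alpha>)"
      using alpha_pos A L by (intro powr_mono2) auto
    moreover have "((A / L) * (W x / V x) powr \<alpha>) powr (1/\<alpha>) = c * (W x / V x)"
    proof -
      have "((A / L) * (W x / V x) powr \<alpha>) powr (1/\<alpha>) = c * ((W x / V x) powr \<alpha>) powr (1/\<alpha>)"
        unfolding c_def by (rule powr_mult)
      also have "((W x / V x) powr \<alpha>) powr (1/\<alpha>) = W x / V x"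
        using alpha_pos W_pos[OF x] V_pos[OF x] by (simp add: powr_powr)
      finally show ?thesis .
    qed
    ultimately have "c * (W x / V x) \<le> \<Phi> x powr (1/\<alpha>)" by simp
    then show "c * W x \<le> \<Psi> x"
      using V_pos[OF x] by (simp add: \<Psi>_def field_simps)
  qed
  then have F1: "Lnorm M S0 U (\<lambda>x. ennreal (W x * \<Psi> x powr -q)) \<le> ennreal (c powr -q) * X"
    unfolding X_def using W_pos A L by (intro Lnorm_rescaled_weight_le) (auto simp: c_def \<Psi>_def)
  have F2: "Lnorm M R0 U (\<lambda>x. ennreal (1 / (V x * \<Psi> x powr -q))) \<le> Y * ennreal ((A * measure M U) powr (q / \<alpha>))"
    using Lnorm_rescaled_dual_weight_le[OF assms(1,3,4) V_pos \<Phi>_pos finite] A m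
    unfolding Y_def \<Psi>_def average by (simp add: epow_ennreal)
  have "ennreal (measure M U powr -(rcp S0 + rcp R0)) * Lnorm M S0 U (\<lambda>x. ennreal (W x * \<Psi> x powr -q))
      * Lnorm M R0 U (\<lambda>x. ennreal (1 / (V x * \<Psi> x powr -q)))
    \<le> ennreal m' * (ennreal (c powr -q) * X) * (Y * ennreal ((A * measure M U) powr (q / \<alpha>)))"
    unfolding m'_def rcp_S0_R0 by (intro mult_mono F1 F2) auto
  also have "\<dots> = ennreal (m' * c powr -q * (A * measure M U) powr (q / \<alpha>)) * (X * Y)"
    by (simp add: ennreal_mult mult_ac m'_def)
  also have "m' * c powr -q * (A * measure M U) powr (q / \<alpha>) = L powr (q/\<alpha>) * m' powr (1 - q)"
    unfolding m'_def c_def using m A L alpha_pos by (rule rescaling_constant_eq)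
  also have "ennreal (L powr (q/\<alpha>) * m' powr (1 - q)) * (X * Y)
      = ennreal (L powr (q/\<alpha>)) * (if q < 1 then epow (ennreal m'
        * Lnorm M S U (\<lambda>x. ennreal (W x)) * Lnorm M R U (\<lambda>x. ennreal (1 / V x))) (1 - q) else 1)"
    using q_le_1 m by (auto simp: X_def Y_def m'_def ennreal_mult epow_mult epow_ennreal mult_ac)
  finally show ?thesis unfolding m'_def rcp_S_R .
qed

lemma nn_integral_finite_if_AE_bounded_average:
  assumes "U \<in> sets M" "0 < emeasure M U" "0 < c"
    and r: "\<And>x. x \<in> space M \<Longrightarrow> x \<in> U \<Longrightarrow> 0 < r x"
    and bounded: "AE x in M. x \<in> U \<longrightarrow> ennreal c * (\<integral>\<^sup>+y. \<phi> y * indicator U y \<partial>M) * ennreal (r x) \<le> ennreal (h x)"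
  shows "(\<integral>\<^sup>+y. \<phi> y * indicator U y \<partial>M) \<noteq> top"
proof
  assume top: "(\<integral>\<^sup>+y. \<phi> y * indicator U y \<partial>M) = top"
  have "AE x in M. x \<notin> U"
    using bounded
  proof (elim AE_mp, intro AE_I2 impI notI)
    fix x assume "x \<in> space M" "x \<in> U"
      and "x \<in> U \<longrightarrow> ennreal c * (\<integral>\<^sup>+y. \<phi> y * indicator U y \<partial>M) * ennreal (r x) \<le> ennreal (h x)"
    then have "top \<le> ennreal (h x)"
      using r[of x] top \<open>0 < c\<close> by (simp add: ennreal_mult_top ennreal_top_mult)
    then show False by (simp add: top_unique)
  qed
  then have "U \<in> null_sets M" using AE_iff_null_sets[OF \<open>U \<in> sets M\<close>] by simp
  then show False using \<open>0 < emeasure M U\<close> by (simp add: null_setsD1)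
qed

lemma (in rescaled_exponents) wv_const_rescaled_le:
  fixes W V \<Phi> :: "'a \<Rightarrow> real"
  assumes B: "basis_of_sets M \<U>"
    and [measurable]: "W \<in> borel_measurable M" "V \<in> borel_measurable M" "\<Phi> \<in> borel_measurable M"
    and W_pos: "\<And>x. x \<in> space M \<Longrightarrow> 0 < W x" and V_pos: "\<And>x. x \<in> space M \<Longrightarrow> 0 < V x"
    and \<Phi>_pos: "\<And>x. x \<in> space M \<Longrightarrow> 0 < \<Phi> x" and L: "0 < L"
    and A1: "\<And>U. U \<in> \<U> \<Longrightarrow> AE x in M. x \<in> U \<longrightarrow>
      ennreal (1 / measure M U) * (\<integral>\<^sup>+y. ennreal (\<Phi> y) * indicator U y \<partial>M)
        * ennreal ((W x / V x) powr \<alpha>) \<le> ennreal (L * \<Phi> x)"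
    and K: "wv_const M \<U> S R W V < top"
  defines "\<Psi> \<equiv> \<lambda>x. \<Phi> x powr (1/\<alpha>) * V x"
  shows "wv_const M \<U> S0 R0 (\<lambda>x. W x * \<Psi> x powr -q) (\<lambda>x. V x * \<Psi> x powr -q)
    \<le> ennreal (L powr (q/\<alpha>)) * (if q < 1 then epow (wv_const M \<U> S R W V) (1 - q) else 1)"
  unfolding wv_const_def[of M \<U> S0 R0]
proof (rule SUP_least)
  fix U assume U: "U \<in> \<U>"
  note U_facts = basis_of_setsD[OF B U]
  have [measurable]: "U \<in> sets M" using U_facts by simp
  define m where "m = measure M U"
  define K_U where "K_U = ennreal (m powr -(rcp S + rcp R))
    * Lnorm M S U (\<lambda>x. ennreal (W x)) * Lnorm M R U (\<lambda>x. ennreal (1 / V x))"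
  have K_U: "K_U \<le> wv_const M \<U> S R W V"
    unfolding K_U_def m_def wv_const_def by (rule SUP_upper[OF U])
  have "0 < Lnorm M S U (\<lambda>x. ennreal (W x))"
    using pos U_facts W_pos by (intro Lnorm_pos) auto
  moreover have "0 < m" using U_facts by (simp add: m_def)
  ultimately have "Lnorm M R U (\<lambda>x. ennreal (1 / V x)) \<noteq> top"
    using K_U K by (auto simp: K_U_def ennreal_mult_eq_top_iff top_unique)
  define I where "I = (\<integral>\<^sup>+y. ennreal (\<Phi> y) * indicator U y \<partial>M)"
  have "0 < I"
    using pos U_facts \<Phi>_pos Lnorm_pos[of "\<lambda>x. ennreal (\<Phi> x)" M U 1] by (auto simp: I_def Lnorm_one)
  have "I \<noteq> top"
    unfolding I_def using U_facts A1[OF U] W_pos V_pos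
    by (intro nn_integral_finite_if_AE_bounded_average) (auto simp: less_imp_neq[symmetric])
  define A where "A = enn2real I / m"
  have A: "0 < A" "I = ennreal (A * m)"
    using \<open>0 < I\<close> \<open>I \<noteq> top\<close> \<open>0 < m\<close> by (auto simp: A_def enn2real_positive_iff top.not_eq_extremum ennreal_enn2real_if)
  have "AE x in M. x \<in> U \<longrightarrow> A * (W x / V x) powr \<alpha> \<le> L * \<Phi> x"
    using A1[OF U]
  proof (elim AE_mp, intro AE_I2 impI)
    fix x assume x: "x \<in> space M" and "x \<in> U"
      and "x \<in> U \<longrightarrow> ennreal (1 / measure M U) * (\<integral>\<^sup>+y. ennreal (\<Phi> y) * indicator U y \<partial>M)
        * ennreal ((W x / V x) powr \<alpha>) \<le> ennreal (L * \<Phi> x)"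
    then have "ennreal (1 / m) * ennreal (A * m) * ennreal ((W x / V x) powr \<alpha>) \<le> ennreal (L * \<Phi> x)"
      using A by (simp add: I_def m_def)
    then have "ennreal (A * (W x / V x) powr \<alpha>) \<le> ennreal (L * \<Phi> x)"
      using \<open>0 < m\<close> A by (simp flip: ennreal_mult)
    then show "A * (W x / V x) powr \<alpha> \<le> L * \<Phi> x"
      using L \<Phi>_pos[OF x] by simp
  qed
  then have "ennreal (m powr -(rcp S0 + rcp R0)) * Lnorm M S0 U (\<lambda>x. ennreal (W x * \<Psi> x powr -q))
      * Lnorm M R0 U (\<lambda>x. ennreal (1 / (V x * \<Psi> x powr -q)))
    \<le> ennreal (L powr (q/\<alpha>)) * (if q < 1 then epow K_U (1 - q) else 1)"
    unfolding K_U_def \<Psi>_def m_def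
    using \<open>0 < m\<close> W_pos V_pos \<Phi>_pos L A \<open>Lnorm M R U (\<lambda>x. ennreal (1 / V x)) \<noteq> top\<close>
    by (intro rescaled_cube_constant_le) (auto simp: I_def m_def)
  also have "\<dots> \<le> ennreal (L powr (q/\<alpha>)) * (if q < 1 then epow (wv_const M \<U> S R W V) (1 - q) else 1)"
    using K_U by (auto intro!: mult_left_mono epow_mono)
  finally show "ennreal (measure M U powr -(rcp S0 + rcp R0)) * Lnorm M S0 U (\<lambda>x. ennreal (W x * \<Psi> x powr -q))
      * Lnorm M R0 U (\<lambda>x. ennreal (1 / (V x * \<Psi> x powr -q)))
    \<le> ennreal (L powr (q/\<alpha>)) * (if q < 1 then epow (wv_const M \<U> S R W V) (1 - q) else 1)"
    unfolding m_def .
qed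

lemma real_representative_AE:
  fixes \<Phi> :: "'a \<Rightarrow> ennreal" and g :: "'a \<Rightarrow> real"
  assumes [measurable]: "\<Phi> \<in> borel_measurable M" "g \<in> borel_measurable M"
    and finite: "AE x in M. \<Phi> x \<noteq> top" and g: "\<And>x. x \<in> space M \<Longrightarrow> ennreal (g x) \<le> \<Phi> x"
  obtains \<phi> where "\<phi> \<in> borel_measurable M" "\<And>x. x \<in> space M \<Longrightarrow> g x \<le> \<phi> x"
    "AE x in M. ennreal (\<phi> x) = \<Phi> x"
proof
  show "(\<lambda>x. if \<Phi> x = top then g x else enn2real (\<Phi> x)) \<in> borel_measurable M" by measurable
  show "g x \<le> (if \<Phi> x = top then g x else enn2real (\<Phi> x))" if "x \<in> space M" for x
    using g[OF that] by (cases "\<Phi> x") (auto simp: ennreal_le_iff2)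
  show "AE x in M. ennreal (if \<Phi> x = top then g x else enn2real (\<Phi> x)) = \<Phi> x"
    using finite by (elim eventually_mono) (simp add: ennreal_enn2real_if)
qed

lemma Rubio_de_Francia_maxop_nn:
  fixes g :: "'a \<Rightarrow> ennreal"
  assumes B: "basis_of_sets M \<U>" and t: "0 < t"
    and bounded: "maxop_bounded M \<U> (ennreal t) a b"
    and [measurable]: "a \<in> borel_measurable M" "b \<in> borel_measurable M" "g \<in> borel_measurable M"
    and a_pos: "\<And>x. x \<in> space M \<Longrightarrow> 0 < a x" and b_pos: "\<And>x. x \<in> space M \<Longrightarrow> 0 < b x"
    and g_finite: "(\<integral>\<^sup>+x. epow (g x * ennreal (a x)) t \<partial>M) \<noteq> top"
  obtains \<Phi> L where "\<Phi> \<in> borel_measurable M" "\<And>x. g x \<le> \<Phi> x"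
    "(\<integral>\<^sup>+x. epow (\<Phi> x * ennreal (a x)) t \<partial>M) \<noteq> top" "0 < L"
    "\<And>x. x \<in> space M \<Longrightarrow> maxop_nn M \<U> \<Phi> x * ennreal (b x / a x) \<le> ennreal L * \<Phi> x"
proof -
  obtain C where C: "0 < C" and maxop_bound: "\<And>\<phi>. \<phi> \<in> borel_measurable M \<Longrightarrow>
      (\<integral>\<^sup>+x. epow (\<phi> x * ennreal (a x)) t \<partial>M) \<noteq> top \<Longrightarrow>
      (\<integral>\<^sup>+x. epow (maxop_nn M \<U> \<phi> x * ennreal (b x)) t \<partial>M) \<le> ennreal C * (\<integral>\<^sup>+x. epow (\<phi> x * ennreal (a x)) t \<partial>M)"
    using maxop_bounded_nn_integral[OF t bounded] a_pos by auto
  define T where "T \<phi> x = maxop_nn M \<U> \<phi> x * ennreal (b x / a x)" for \<phi> x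
  have "ennreal (b x / a x) * ennreal (a x) = ennreal (b x)" if "x \<in> space M" for x
    using a_pos[OF that] b_pos[OF that] by (simp add: ennreal_mult[symmetric])
  then have T_a: "epow (T \<phi> x * ennreal (a x)) t = epow (maxop_nn M \<U> \<phi> x * ennreal (b x)) t"
    if "x \<in> space M" for \<phi> x
    using that by (simp add: T_def mult.assoc)
  show ?thesis
  proof (rule Rubio_de_Francia_iteration[OF t C, where T = T and g = g])
    show "T \<phi> \<in> borel_measurable M" for \<phi>
      unfolding T_def using maxop_nn_measurable[OF B] by measurable
    show "T (\<lambda>y. \<Sum>k. c k * \<phi> k y) x \<le> (\<Sum>k. c k * T (\<phi> k) x)"
      if "\<And>k. \<phi> k \<in> borel_measurable M" for c \<phi> x
    proof -
      have "maxop_nn M \<U> (\<lambda>y. \<Sum>k. c k * \<phi> k y) x \<le> (\<Sum>k. c k * maxop_nn M \<U> (\<phi> k) x)"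
        by (rule maxop_nn_suminf_le[OF _ B]) (rule that)
      then show ?thesis unfolding T_def by (simp add: mult_right_mono mult.assoc[symmetric])
    qed
    show "(\<integral>\<^sup>+x. epow (T \<phi> x * ennreal (a x)) t \<partial>M) \<le> ennreal C * (\<integral>\<^sup>+x. epow (\<phi> x * ennreal (a x)) t \<partial>M)"
      if "\<phi> \<in> borel_measurable M" "(\<integral>\<^sup>+x. epow (\<phi> x * ennreal (a x)) t \<partial>M) \<noteq> top" for \<phi>
      using maxop_bound[OF that] T_a by (simp cong: nn_integral_cong)
  qed (use g_finite that in \<open>auto simp: T_def\<close>)
qed

lemma Rubio_de_Francia_maxop:
  assumes B: "basis_of_sets M \<U>" and t: "0 < t"
    and bounded: "maxop_bounded M \<U> (ennreal t) a b"
    and [measurable]: "a \<in> borel_measurable M" "b \<in> borel_measurable M" "g \<in> borel_measurable M"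
    and a_pos: "\<And>x. x \<in> space M \<Longrightarrow> 0 < a x" and b_pos: "\<And>x. x \<in> space M \<Longrightarrow> 0 < b x"
    and g_pos: "\<And>x. x \<in> space M \<Longrightarrow> 0 < g x"
    and g_finite: "(\<integral>\<^sup>+x. ennreal ((g x * a x) powr t) \<partial>M) \<noteq> top"
  obtains \<phi> L where "\<phi> \<in> borel_measurable M" "\<And>x. x \<in> space M \<Longrightarrow> g x \<le> \<phi> x"
    "(\<integral>\<^sup>+x. ennreal ((\<phi> x * a x) powr t) \<partial>M) \<noteq> top" "0 < L"
    "\<And>U. U \<in> \<U> \<Longrightarrow> AE x in M. x \<in> U \<longrightarrow> ennreal (1 / measure M U)
      * (\<integral>\<^sup>+y. ennreal (\<phi> y) * indicator U y \<partial>M) * ennreal (b x / a x) \<le> ennreal (L * \<phi> x)"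
proof -
  have epow_eq: "epow (ennreal y * ennreal (a x)) t = ennreal ((y * a x) powr t)"
    if "x \<in> space M" "0 \<le> y" for x y
  proof -
    have "ennreal y * ennreal (a x) = ennreal (y * a x)" using that a_pos[of x] by (simp add: ennreal_mult)
    then show ?thesis using that a_pos[of x] by (simp add: epow_ennreal)
  qed
  have g_finite': "(\<integral>\<^sup>+x. epow (ennreal (g x) * ennreal (a x)) t \<partial>M) \<noteq> top"
    using g_finite g_pos by (simp add: epow_eq less_imp_le cong: nn_integral_cong)
  obtain \<Phi> L where [measurable]: "\<Phi> \<in> borel_measurable M" and g_le_\<Phi>: "\<And>x. ennreal (g x) \<le> \<Phi> x"
    and \<Phi>_finite: "(\<integral>\<^sup>+x. epow (\<Phi> x * ennreal (a x)) t \<partial>M) \<noteq> top" and L: "0 < L"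
    and T\<Phi>: "\<And>x. x \<in> space M \<Longrightarrow> maxop_nn M \<U> \<Phi> x * ennreal (b x / a x) \<le> ennreal L * \<Phi> x"
  proof (rule Rubio_de_Francia_maxop_nn[OF B t bounded assms(4,5) _ a_pos b_pos g_finite'])
    show "(\<lambda>x. ennreal (g x)) \<in> borel_measurable M" by measurable
  qed (assumption | rule that)+
  have "AE x in M. \<Phi> x \<noteq> top"
    by (rule AE_finite_if_nn_integral_epow_finite[OF \<Phi>_finite]) (use a_pos in auto)
  then obtain \<phi> where [measurable]: "\<phi> \<in> borel_measurable M" and g_le_\<phi>: "\<And>x. x \<in> space M \<Longrightarrow> g x \<le> \<phi> x"
    and \<phi>_eq: "AE x in M. ennreal (\<phi> x) = \<Phi> x"
    using g_le_\<Phi> by (rule real_representative_AE[rotated 2]) simp_all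
  show ?thesis
  proof
    show "\<phi> \<in> borel_measurable M" by simp
    show "g x \<le> \<phi> x" if "x \<in> space M" for x using g_le_\<phi>[OF that] .
    have "(\<integral>\<^sup>+x. ennreal ((\<phi> x * a x) powr t) \<partial>M) = (\<integral>\<^sup>+x. epow (\<Phi> x * ennreal (a x)) t \<partial>M)"
      using \<phi>_eq
    proof (intro nn_integral_cong_AE, elim AE_mp, intro AE_I2 impI)
      fix x assume "x \<in> space M" "ennreal (\<phi> x) = \<Phi> x"
      then show "ennreal ((\<phi> x * a x) powr t) = epow (\<Phi> x * ennreal (a x)) t"
        using epow_eq[of x "\<phi> x"] g_le_\<phi>[of x] g_pos[of x] by simp
    qed
    then show "(\<integral>\<^sup>+x. ennreal ((\<phi> x * a x) powr t) \<partial>M) \<noteq> top" using \<Phi>_finite by simp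
    show "0 < L" by (rule L)
    fix U assume U: "U \<in> \<U>"
    have "(\<integral>\<^sup>+y. ennreal (\<phi> y) * indicator U y \<partial>M) = (\<integral>\<^sup>+y. \<Phi> y * indicator U y \<partial>M)"
      using \<phi>_eq by (intro nn_integral_cong_AE) (auto elim: eventually_mono)
    then show "AE x in M. x \<in> U \<longrightarrow> ennreal (1 / measure M U)
      * (\<integral>\<^sup>+y. ennreal (\<phi> y) * indicator U y \<partial>M) * ennreal (b x / a x) \<le> ennreal (L * \<phi> x)"
      using \<phi>_eq
    proof (elim AE_mp, intro AE_I2 impI)
      fix x assume x: "x \<in> space M" "ennreal (\<phi> x) = \<Phi> x" "x \<in> U"
      have "ennreal (1 / measure M U) * (\<integral>\<^sup>+y. \<Phi> y * indicator U y \<partial>M) * ennreal (b x / a x)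
          \<le> maxop_nn M \<U> \<Phi> x * ennreal (b x / a x)"
        by (intro mult_right_mono average_le_maxop_nn U x) simp
      also have "\<dots> \<le> ennreal L * \<Phi> x" using T\<Phi>[OF x(1)] .
      also have "\<dots> = ennreal (L * \<phi> x)"
        unfolding x(2)[symmetric] using L g_le_\<phi>[OF x(1)] g_pos[OF x(1)] by (simp add: ennreal_mult)
      finally show "ennreal (1 / measure M U) * (\<integral>\<^sup>+y. ennreal (\<phi> y) * indicator U y \<partial>M)
          * ennreal (b x / a x) \<le> ennreal (L * \<phi> x)"
        unfolding \<open>(\<integral>\<^sup>+y. ennreal (\<phi> y) * indicator U y \<partial>M) = _\<close> .
    qed
  qed
qed

lemma (in rescaled_exponents) Rubio_de_Francia_rescaling_factor:
  assumes B: "basis_of_sets M \<U>" and W: "weight M W" and V: "weight M V"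
    and K: "wv_const M \<U> S R W V < top"
    and bounded: "maxop_bounded M \<U> (ennreal (enn2real S / \<alpha>)) a b"
    and a: "\<And>x. x \<in> space M \<Longrightarrow> a x = V x powr \<alpha>" and b: "\<And>x. x \<in> space M \<Longrightarrow> b x = W x powr \<alpha>"
    and [measurable]: "G \<in> borel_measurable M" and G_pos: "\<And>x. x \<in> space M \<Longrightarrow> 0 < G x"
    and G_finite: "(\<integral>\<^sup>+x. ennreal (G x powr enn2real S) \<partial>M) \<noteq> top"
  obtains \<Psi> where "\<Psi> \<in> borel_measurable M" "\<And>x. x \<in> space M \<Longrightarrow> G x \<le> \<Psi> x"
    "(\<integral>\<^sup>+x. ennreal (\<Psi> x powr enn2real S) \<partial>M) \<noteq> top"
    "wv_const M \<U> S0 R0 (\<lambda>x. W x * \<Psi> x powr -q) (\<lambda>x. V x * \<Psi> x powr -q) < top"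
proof -
  define t where "t = enn2real S / \<alpha>"
  have t: "0 < t" "\<alpha> * t = enn2real S" using S_real_pos alpha_pos by (simp_all add: t_def)
  have [measurable]: "W \<in> borel_measurable M" "V \<in> borel_measurable M" using W V by (simp_all add: weightD)
  have W_pos: "\<And>x. x \<in> space M \<Longrightarrow> 0 < W x" and V_pos: "\<And>x. x \<in> space M \<Longrightarrow> 0 < V x"
    using W V by (simp_all add: weightD)
  have [measurable]: "a \<in> borel_measurable M" "b \<in> borel_measurable M"
    using measurable_cong[of M a "\<lambda>x. V x powr \<alpha>"] measurable_cong[of M b "\<lambda>x. W x powr \<alpha>"] a b by simp_all
  define g where "g x = (G x / V x) powr \<alpha>" for x
  have g_a: "(g x * a x) powr t = G x powr enn2real S" if "x \<in> space M" for x
    using a[OF that] G_pos[OF that] V_pos[OF that] t by (simp add: g_def powr_divide powr_powr)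
  obtain \<phi> L where [measurable]: "\<phi> \<in> borel_measurable M" and g_le_\<phi>: "\<And>x. x \<in> space M \<Longrightarrow> g x \<le> \<phi> x"
    and \<phi>_finite: "(\<integral>\<^sup>+x. ennreal ((\<phi> x * a x) powr t) \<partial>M) \<noteq> top" and L: "0 < L"
    and A1: "\<And>U. U \<in> \<U> \<Longrightarrow> AE x in M. x \<in> U \<longrightarrow> ennreal (1 / measure M U)
      * (\<integral>\<^sup>+y. ennreal (\<phi> y) * indicator U y \<partial>M) * ennreal (b x / a x) \<le> ennreal (L * \<phi> x)"
  proof (rule Rubio_de_Francia_maxop[OF B t(1) bounded[folded t_def], where g = g])
    show "g \<in> borel_measurable M" unfolding g_def[abs_def] by measurable
    show "0 < a x" "0 < b x" "0 < g x" if "x \<in> space M" for x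
      using a[OF that] b[OF that] W_pos[OF that] V_pos[OF that] G_pos[OF that] by (simp_all add: g_def)
    show "(\<integral>\<^sup>+x. ennreal ((g x * a x) powr t) \<partial>M) \<noteq> top"
      using G_finite g_a by (simp cong: nn_integral_cong)
  qed (use that in auto)
  have \<phi>_pos: "0 < \<phi> x" if "x \<in> space M" for x
    using g_le_\<phi>[OF that] G_pos[OF that] V_pos[OF that] by (smt (verit) divide_pos_pos g_def powr_gt_zero)
  define \<Psi> where "\<Psi> x = \<phi> x powr (1 / \<alpha>) * V x" for x
  show ?thesis
  proof
    show "\<Psi> \<in> borel_measurable M" unfolding \<Psi>_def[abs_def] by measurable
    show "G x \<le> \<Psi> x" if x: "x \<in> space M" for x
    proof -
      have "G x / V x = g x powr (1 / \<alpha>)"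
        using G_pos[OF x] V_pos[OF x] alpha_pos by (simp add: g_def powr_powr)
      also have "\<dots> \<le> \<phi> x powr (1 / \<alpha>)"
        using g_le_\<phi>[OF x] alpha_pos by (intro powr_mono2) (auto simp: g_def)
      finally show ?thesis using V_pos[OF x] by (simp add: \<Psi>_def divide_le_eq)
    qed
    have "(\<phi> x * a x) powr t = \<Psi> x powr enn2real S" if x: "x \<in> space M" for x
      using a[OF x] \<phi>_pos[OF x] V_pos[OF x] alpha_pos t
      by (simp add: \<Psi>_def powr_mult powr_powr mult.commute t_def)
    then show "(\<integral>\<^sup>+x. ennreal (\<Psi> x powr enn2real S) \<partial>M) \<noteq> top"
      using \<phi>_finite by (simp cong: nn_integral_cong)
    have "wv_const M \<U> S0 R0 (\<lambda>x. W x * \<Psi> x powr -q) (\<lambda>x. V x * \<Psi> x powr -q)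
        \<le> ennreal (L powr (q/\<alpha>)) * (if q < 1 then epow (wv_const M \<U> S R W V) (1 - q) else 1)"
      unfolding \<Psi>_def
    proof (rule wv_const_rescaled_le[OF B _ _ _ W_pos V_pos \<phi>_pos L _ K])
      fix U assume "U \<in> \<U>"
      have "b x / a x = (W x / V x) powr \<alpha>" if "x \<in> space M" for x
        using a[OF that] b[OF that] by (simp add: powr_divide W_pos V_pos less_imp_le that)
      then show "AE x in M. x \<in> U \<longrightarrow> ennreal (1 / measure M U) * (\<integral>\<^sup>+y. ennreal (\<phi> y) * indicator U y \<partial>M)
          * ennreal ((W x / V x) powr \<alpha>) \<le> ennreal (L * \<phi> x)"
        using A1[OF \<open>U \<in> \<U>\<close>] by (auto elim!: AE_mp intro!: AE_I2)
    qed measurable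
    also have "\<dots> < top" using K by (simp add: ennreal_mult_less_top top.not_eq_extremum)
    finally show "wv_const M \<U> S0 R0 (\<lambda>x. W x * \<Psi> x powr -q) (\<lambda>x. V x * \<Psi> x powr -q) < top" .
  qed
qed

section \<open>Extrapolation\<close>

lemma nn_integral_powr_less_top_if_Lpw:
  assumes f: "f \<in> Lpw M p v" and v: "weight M v" and p: "0 < p" "p \<noteq> top"
  shows "(\<integral>\<^sup>+x. ennreal ((\<bar>f x\<bar> * v x) powr enn2real p) \<partial>M) < top"
proof -
  have "(\<integral>\<^sup>+x. epow (ennreal (\<bar>f x\<bar> * v x)) (enn2real p) \<partial>M) < top"
    using f p by (simp add: Lpw_iff_nn_integral)
  moreover have "(\<integral>\<^sup>+x. epow (ennreal (\<bar>f x\<bar> * v x)) (enn2real p) \<partial>M)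
      = (\<integral>\<^sup>+x. ennreal ((\<bar>f x\<bar> * v x) powr enn2real p) \<partial>M)"
    by (rule nn_integral_cong) (use v in \<open>simp add: epow_ennreal weightD less_imp_le\<close>)
  ultimately show ?thesis by simp
qed

lemma Lpw_if_le_powr:
  assumes f: "f \<in> Lpw M p v" and v: "weight M v" and "0 < p" "p \<noteq> top" "0 < p0"
    and [measurable]: "v0 \<in> borel_measurable M" and v0: "\<And>x. x \<in> space M \<Longrightarrow> 0 \<le> v0 x"
    and le: "\<And>x. x \<in> space M \<Longrightarrow> \<bar>f x\<bar> * v0 x \<le> (\<bar>f x\<bar> * v x) powr (enn2real p * rcp p0)"
  shows "f \<in> Lpw M p0 v0"
proof -
  have [measurable]: "f \<in> borel_measurable M" using f by (simp add: Lpw_def)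
  show ?thesis
  proof (cases "p0 = top")
    case True
    have "AE x in M. ennreal (\<bar>f x\<bar> * v0 x) * indicator (space M) x \<le> 1"
    proof (rule AE_I2)
      fix x assume x: "x \<in> space M"
      have "(\<bar>f x\<bar> * v x) powr (enn2real p * rcp p0) \<le> 1" using True by simp
      then have "\<bar>f x\<bar> * v0 x \<le> 1" using le[OF x] by linarith
      then show "ennreal (\<bar>f x\<bar> * v0 x) * indicator (space M) x \<le> 1" using x by simp
    qed
    then have "wnorm M p0 v0 f \<le> 1" unfolding wnorm_def True Lnorm_top
      by (rule esssup_I[rotated]) measurable
    then show ?thesis by (simp add: Lpw_def le_less_trans)
  next
    case False
    define P0 where "P0 = enn2real p0"
    have P0: "0 < P0" "rcp p0 = 1 / P0" using False \<open>0 < p0\<close> by (simp_all add: P0_def enn2real_pos rcp_finite)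
    have "(\<integral>\<^sup>+x. epow (ennreal (\<bar>f x\<bar> * v0 x)) P0 \<partial>M)
        \<le> (\<integral>\<^sup>+x. ennreal ((\<bar>f x\<bar> * v x) powr enn2real p) \<partial>M)"
    proof (rule nn_integral_mono)
      fix x assume x: "x \<in> space M"
      then have "(\<bar>f x\<bar> * v0 x) powr P0 \<le> ((\<bar>f x\<bar> * v x) powr (enn2real p * rcp p0)) powr P0"
        using le[OF x] v0[OF x] P0 by (intro powr_mono2) auto
      also have "\<dots> = (\<bar>f x\<bar> * v x) powr enn2real p" using P0 by (simp add: powr_powr)
      finally show "epow (ennreal (\<bar>f x\<bar> * v0 x)) P0 \<le> ennreal ((\<bar>f x\<bar> * v x) powr enn2real p)"
        using v0[OF x] by (simp add: epow_ennreal ennreal_leI)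
    qed
    also have "\<dots> < top" by (rule nn_integral_powr_less_top_if_Lpw) fact+
    finally show ?thesis using False \<open>0 < p0\<close> by (simp add: Lpw_iff_nn_integral P0_def)
  qed
qed

lemma Lpw_rescaled_weight_down:
  assumes f: "f \<in> Lpw M p v" and v: "weight M v"
    and "0 < p" "0 < p0" and e: "rcp p - rcp p0 = e" "0 < e" and \<kappa>: "0 < \<kappa>"
    and [measurable]: "\<Psi> \<in> borel_measurable M"
    and dominates: "\<And>x. x \<in> space M \<Longrightarrow> (\<bar>f x\<bar> * v x) powr (enn2real p / \<kappa>) \<le> \<Psi> x"
  shows "f \<in> Lpw M p0 (\<lambda>x. v x * \<Psi> x powr -(\<kappa> * e))"
proof (rule Lpw_if_le_powr[OF f v \<open>0 < p\<close> _ \<open>0 < p0\<close>])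
  have [measurable]: "v \<in> borel_measurable M" using v by (simp add: weightD)
  show "(\<lambda>x. v x * \<Psi> x powr -(\<kappa> * e)) \<in> borel_measurable M" by measurable
  show p: "p \<noteq> top" using e rcp_nonneg[of p0] by (intro finite_if_rcp_pos) linarith
  define P where "P = enn2real p"
  have P: "0 < P" "rcp p = 1 / P" using p \<open>0 < p\<close> by (simp_all add: P_def enn2real_pos rcp_finite)
  fix x assume x: "x \<in> space M"
  show "0 \<le> v x * \<Psi> x powr -(\<kappa> * e)" using v x by (simp add: weightD less_imp_le)
  define F where "F = \<bar>f x\<bar> * v x"
  show "\<bar>f x\<bar> * (v x * \<Psi> x powr -(\<kappa> * e)) \<le> (\<bar>f x\<bar> * v x) powr (enn2real p * rcp p0)"
  proof (cases "F = 0")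
    case False
    then have "0 < F" using v x by (simp add: F_def weightD less_imp_le)
    have "\<Psi> x powr -(\<kappa> * e) \<le> (F powr (P / \<kappa>)) powr -(\<kappa> * e)"
      using dominates[OF x] \<open>0 < F\<close> \<kappa> e by (intro powr_mono2') (auto simp: F_def P_def)
    also have "\<dots> = F powr -(P * e)" using \<kappa> by (simp add: powr_powr)
    finally have "F * \<Psi> x powr -(\<kappa> * e) \<le> F * F powr -(P * e)"
      using \<open>0 < F\<close> by (intro mult_left_mono) auto
    also have "\<dots> = F powr (P * rcp p0)"
      using \<open>0 < F\<close> e P by (simp add: powr_diff powr_minus field_simps flip: powr_add)
    finally show ?thesis by (simp add: F_def P_def mult.assoc)
  qed (use v x in \<open>auto simp: F_def dest: weightD(2)\<close>)
qed

lemma Youngs_inequality_le_add: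
  fixes x y \<theta> :: real
  assumes "0 < \<theta>" "\<theta> < 1" "0 \<le> x" "0 \<le> y"
  shows "x powr \<theta> * y powr (1 - \<theta>) \<le> x + y"
proof (cases "x = 0 \<or> y = 0")
  case False
  then have "x powr \<theta> * y powr (1 - \<theta>) \<le> \<theta> * x + (1 - \<theta>) * y"
    using assms by (intro Youngs_inequality_0) auto
  also have "\<dots> \<le> x + y" using assms by (intro add_mono) (auto simp: mult_left_le_one_le)
  finally show ?thesis .
qed (use assms in auto)

lemma nn_integral_mult_powr_less_top:
  fixes F \<Psi> :: "'a \<Rightarrow> real"
  assumes [measurable]: "F \<in> borel_measurable M" "\<Psi> \<in> borel_measurable M"
    and F: "\<And>x. x \<in> space M \<Longrightarrow> 0 \<le> F x" and \<Psi>: "\<And>x. x \<in> space M \<Longrightarrow> 0 < \<Psi> x"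
    and P: "0 < P0" "0 < P" "0 < e" and \<theta>: "P0 / P + e * P0 = 1"
    and F_finite: "(\<integral>\<^sup>+x. ennreal (F x powr P) \<partial>M) < top"
    and \<Psi>_finite: "(\<integral>\<^sup>+x. ennreal (\<Psi> x powr \<kappa>) \<partial>M) \<noteq> top"
  shows "(\<integral>\<^sup>+x. ennreal ((F x * \<Psi> x powr (\<kappa> * e)) powr P0) \<partial>M) < top"
proof -
  have "0 < P0 / P" "0 < e * P0" using P by simp_all
  then have "P0 / P < 1" using \<theta> by linarith
  have "(\<integral>\<^sup>+x. ennreal ((F x * \<Psi> x powr (\<kappa> * e)) powr P0) \<partial>M)
      \<le> (\<integral>\<^sup>+x. ennreal (F x powr P) + ennreal (\<Psi> x powr \<kappa>) \<partial>M)"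
  proof (rule nn_integral_mono)
    fix x assume x: "x \<in> space M"
    have "(F x * \<Psi> x powr (\<kappa> * e)) powr P0 = (F x powr P) powr (P0 / P) * (\<Psi> x powr \<kappa>) powr (e * P0)"
      using F[OF x] \<Psi>[OF x] P by (simp add: powr_mult powr_powr mult_ac)
    also have "e * P0 = 1 - P0 / P" using \<theta> by simp
    also have "(F x powr P) powr (P0 / P) * (\<Psi> x powr \<kappa>) powr (1 - P0 / P) \<le> F x powr P + \<Psi> x powr \<kappa>"
      using \<open>0 < P0 / P\<close> \<open>P0 / P < 1\<close> by (intro Youngs_inequality_le_add) auto
    finally show "ennreal ((F x * \<Psi> x powr (\<kappa> * e)) powr P0) \<le> ennreal (F x powr P) + ennreal (\<Psi> x powr \<kappa>)"
      by (simp add: ennreal_leI flip: ennreal_plus)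
  qed
  also have "\<dots> = (\<integral>\<^sup>+x. ennreal (F x powr P) \<partial>M) + (\<integral>\<^sup>+x. ennreal (\<Psi> x powr \<kappa>) \<partial>M)"
    by (rule nn_integral_add) auto
  also have "\<dots> < top" using F_finite \<Psi>_finite by (simp add: top.not_eq_extremum)
  finally show ?thesis .
qed

lemma AE_le_wnorm_top:
  assumes "wnorm M top v f \<noteq> top"
  shows "AE x in M. \<bar>f x\<bar> * v x \<le> enn2real (wnorm M top v f)"
proof -
  have "AE x in M. ennreal (\<bar>f x\<bar> * v x) * indicator (space M) x \<le> wnorm M top v f"
    unfolding wnorm_def Lnorm_top by (rule esssup_AE)
  then show ?thesis
  proof (elim AE_mp, intro AE_I2 impI)
    fix x assume "x \<in> space M" "ennreal (\<bar>f x\<bar> * v x) * indicator (space M) x \<le> wnorm M top v f"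
    then have "ennreal (\<bar>f x\<bar> * v x) \<le> ennreal (enn2real (wnorm M top v f))"
      using assms by (simp add: ennreal_enn2real_if)
    then show "\<bar>f x\<bar> * v x \<le> enn2real (wnorm M top v f)"
      using enn2real_nonneg[of "wnorm M top v f"] by (auto simp: ennreal_le_iff2)
  qed
qed

lemma Lpw_rescaled_weight_up:
  assumes f: "f \<in> Lpw M p v" and v: "weight M v"
    and "0 < p" "0 < p0" and e: "rcp p0 - rcp p = e" "0 < e"
    and \<kappa>: "0 < \<kappa>" and [measurable]: "\<Psi> \<in> borel_measurable M"
    and \<Psi>_pos: "\<And>x. x \<in> space M \<Longrightarrow> 0 < \<Psi> x"
    and \<Psi>_integrable: "(\<integral>\<^sup>+x. ennreal (\<Psi> x powr \<kappa>) \<partial>M) \<noteq> top"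
  shows "f \<in> Lpw M p0 (\<lambda>x. v x * \<Psi> x powr (\<kappa> * e))"
proof -
  have p0: "p0 \<noteq> top" using e rcp_nonneg[of p] by (intro finite_if_rcp_pos) linarith
  define P0 where "P0 = enn2real p0"
  define F where "F x = \<bar>f x\<bar> * v x" for x
  have P0: "0 < P0" "rcp p0 = 1 / P0" using p0 \<open>0 < p0\<close> by (simp_all add: P0_def enn2real_pos rcp_finite)
  have [measurable]: "f \<in> borel_measurable M" "v \<in> borel_measurable M"
    using f v by (simp_all add: Lpw_def weightD)
  have F_nonneg: "0 \<le> F x" if "x \<in> space M" for x using v that by (simp add: F_def weightD less_imp_le)
  have F_power: "(F x * \<Psi> x powr (\<kappa> * e)) powr P0 = F x powr P0 * \<Psi> x powr (\<kappa> * (e * P0))"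
    if "x \<in> space M" for x
    using F_nonneg[OF that] \<Psi>_pos[OF that] by (simp add: powr_mult powr_powr mult_ac)
  have "(\<integral>\<^sup>+x. ennreal ((F x * \<Psi> x powr (\<kappa> * e)) powr P0) \<partial>M) < top"
  proof (cases "p = top")
    case False
    define P where "P = enn2real p"
    have P: "0 < P" "rcp p = 1 / P" using False \<open>0 < p\<close> by (simp_all add: P_def enn2real_pos rcp_finite)
    have "P0 / P + e * P0 = 1" using e P P0 by (simp add: field_simps)
    then show ?thesis
      using nn_integral_powr_less_top_if_Lpw[OF f v \<open>0 < p\<close> False] \<Psi>_integrable F_nonneg \<Psi>_pos e P P0
      by (intro nn_integral_mult_powr_less_top[where P = P]) (auto simp: F_def P_def)
  next
    case True
    then have "e * P0 = 1" using e P0 by (simp add: field_simps)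
    define E where "E = enn2real (wnorm M p v f)"
    have "wnorm M p v f \<noteq> top" using f by (simp add: Lpw_def)
    then have F_le: "AE x in M. F x \<le> E"
      using AE_le_wnorm_top[of M v f] True by (simp add: E_def F_def)
    have "(\<integral>\<^sup>+x. ennreal ((F x * \<Psi> x powr (\<kappa> * e)) powr P0) \<partial>M)
        \<le> (\<integral>\<^sup>+x. ennreal (E powr P0) * ennreal (\<Psi> x powr \<kappa>) \<partial>M)"
      using F_le
    proof (intro nn_integral_mono_AE, elim AE_mp, intro AE_I2 impI)
      fix x assume x: "x \<in> space M" and "F x \<le> E"
      then have "F x powr P0 * \<Psi> x powr \<kappa> \<le> E powr P0 * \<Psi> x powr \<kappa>"
        using F_nonneg[OF x] P0 by (intro mult_right_mono powr_mono2) auto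
      then show "ennreal ((F x * \<Psi> x powr (\<kappa> * e)) powr P0) \<le> ennreal (E powr P0) * ennreal (\<Psi> x powr \<kappa>)"
        unfolding F_power[OF x] \<open>e * P0 = 1\<close> by (simp add: ennreal_leI flip: ennreal_mult)
    qed
    also have "\<dots> = ennreal (E powr P0) * (\<integral>\<^sup>+x. ennreal (\<Psi> x powr \<kappa>) \<partial>M)"
      by (rule nn_integral_cmult) measurable
    also have "\<dots> < top" using \<Psi>_integrable by (simp add: ennreal_mult_less_top top.not_eq_extremum)
    finally show ?thesis .
  qed
  moreover have "(\<integral>\<^sup>+x. ennreal ((F x * \<Psi> x powr (\<kappa> * e)) powr P0) \<partial>M)
      = (\<integral>\<^sup>+x. epow (ennreal (\<bar>f x\<bar> * (v x * \<Psi> x powr (\<kappa> * e)))) P0 \<partial>M)"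
  proof (rule nn_integral_cong)
    fix x assume "x \<in> space M"
    then have "0 \<le> F x * \<Psi> x powr (\<kappa> * e)" using F_nonneg by simp
    then show "ennreal ((F x * \<Psi> x powr (\<kappa> * e)) powr P0)
        = epow (ennreal (\<bar>f x\<bar> * (v x * \<Psi> x powr (\<kappa> * e)))) P0"
      by (simp add: F_def epow_ennreal mult.assoc)
  qed
  ultimately show ?thesis using p0 \<open>0 < p0\<close> by (simp add: Lpw_iff_nn_integral P0_def)
qed

lemma wv_const_swap:
  assumes B: "basis_of_sets M \<U>" and "0 < s" "0 < r"
    and [measurable]: "w \<in> borel_measurable M" "v \<in> borel_measurable M"
      "w' \<in> borel_measurable M" "v' \<in> borel_measurable M"
    and w_pos: "\<And>x. x \<in> space M \<Longrightarrow> 0 < w x"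
    and w': "\<And>x. x \<in> space M \<Longrightarrow> w' x = 1 / v x" and v': "\<And>x. x \<in> space M \<Longrightarrow> v' x = 1 / w x"
  shows "wv_const M \<U> s r w v = wv_const M \<U> r s w' v'"
  unfolding wv_const_def
proof (rule SUP_cong[OF refl])
  fix U assume "U \<in> \<U>"
  with B have [measurable]: "U \<in> sets M" by (rule basis_of_setsD(1))
  have "Lnorm M s U (\<lambda>x. ennreal (w x)) = Lnorm M s U (\<lambda>x. ennreal (1 / v' x))"
    using assms by (intro Lnorm_cong) auto
  moreover have "Lnorm M r U (\<lambda>x. ennreal (1 / v x)) = Lnorm M r U (\<lambda>x. ennreal (w' x))"
    using assms by (intro Lnorm_cong) auto
  ultimately show "ennreal (measure M U powr -(rcp s + rcp r)) * Lnorm M s U (\<lambda>x. ennreal (w x))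
      * Lnorm M r U (\<lambda>x. ennreal (1 / v x))
    = ennreal (measure M U powr -(rcp r + rcp s)) * Lnorm M r U (\<lambda>x. ennreal (w' x))
      * Lnorm M s U (\<lambda>x. ennreal (1 / v' x))"
    by (simp add: ac_simps)
qed

lemma weight_mult_powr:
  assumes "weight M w" "\<Psi> \<in> borel_measurable M" "\<And>x. x \<in> space M \<Longrightarrow> 0 < \<Psi> x"
  shows "weight M (\<lambda>x. w x * \<Psi> x powr c)"
  using assms by (auto simp: weight_def less_imp_neq[symmetric] intro!: mult_pos_pos)

lemma rescaled_pair_in_W_class:
  assumes "gi \<noteq> 0" "weight M w" "weight M v"
    and "\<Psi> \<in> borel_measurable M" "\<And>x. x \<in> space M \<Longrightarrow> 0 < \<Psi> x"
    and "wv_const M \<U> s0 r0 (\<lambda>x. w x * \<Psi> x powr c) (\<lambda>x. v x * \<Psi> x powr c) < top"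
  shows "((\<lambda>x. w x * \<Psi> x powr c), (\<lambda>x. v x * \<Psi> x powr c)) \<in> W_class M \<U> gi s0 r0 w v"
  using assms by (auto simp: W_class_def weight_mult_powr less_imp_neq[symmetric])

lemma obtain_positive_nn_integrable:
  assumes "sigma_finite_measure M"
  obtains h :: "'a \<Rightarrow> real" where "h \<in> borel_measurable M" "\<And>x. 0 < h x"
    "(\<integral>\<^sup>+x. ennreal (h x) \<partial>M) \<noteq> top"
proof (rule sigma_finite_measure.obtain_positive_integrable_function[OF assms])
  fix h :: "'a \<Rightarrow> real"
  assume "h \<in> borel_measurable M" "\<And>x. 0 < h x" "\<And>x. h x \<le> 1" "integrable M h"
  then show thesis using that[of h] by (auto dest: integrableD)
qed

lemma (in rescaled_exponents) S_divide_alpha: "S / ennreal \<alpha> = ennreal (enn2real S / \<alpha>)"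
proof -
  have "S = ennreal (enn2real S)" using S_finite by (simp add: ennreal_enn2real_if)
  also have "\<dots> / ennreal \<alpha> = ennreal (enn2real S / \<alpha>)"
    using S_real_pos alpha_pos by (intro divide_ennreal) auto
  finally show ?thesis .
qed

lemma extrapolation_pos:
  assumes sf: "sigma_finite_measure M" and B: "basis_of_sets M \<U>"
    and positive: "0 < p0" "0 < s0" "0 < r0" "0 < p" "0 < s" "0 < r"
    and rcp_p: "rcp p - rcp p0 = gi" and rcp_s: "rcp s - rcp s0 = gi" and rcp_r: "rcp r0 - rcp r = gi"
    and gi: "0 < gi" and w: "weight M w" and v: "weight M v"
    and K: "wv_const M \<U> s r w v < top"
    and bounded: "maxop_bounded M \<U> (t_exp gi s0 r0 s r) (vt_weight gi s0 r0 w v) (wt_weight gi s0 r0 w v)"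
    and f: "f \<in> Lpw M p v"
  shows "\<exists>(w0, v0) \<in> W_class M \<U> gi s0 r0 w v. f \<in> Lpw M p0 v0"
proof -
  interpret rescaled_exponents s r s0 r0 gi
    using positive gi rcp_s rcp_r by unfold_locales auto
  have p: "p \<noteq> top" using rcp_p gi rcp_nonneg[of p0] by (intro finite_if_rcp_pos) linarith
  have [measurable]: "f \<in> borel_measurable M" "v \<in> borel_measurable M"
    using f v by (simp_all add: Lpw_def weightD)
  obtain h where [measurable]: "h \<in> borel_measurable M" and h_pos: "\<And>x. 0 < h x"
    and h_integrable: "(\<integral>\<^sup>+x. ennreal (h x) \<partial>M) \<noteq> top"
    using obtain_positive_nn_integrable[OF sf] by metis
  define F where "F x = (\<bar>f x\<bar> * v x) powr enn2real p" for x
  \<comment> \<open>adding \<open>h\<close> makes \<open>G\<close>, and hence the factor \<open>\<Psi> \<ge> G\<close>, strictly positive\<close>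
  define G where "G x = (F x + h x) powr (1 / enn2real s)" for x
  have F_h_pos: "0 < F x + h x" for x using h_pos[of x] by (simp add: F_def add_nonneg_pos)
  have G_pos: "0 < G x" for x using F_h_pos[of x] by (simp add: G_def)
  have "(\<integral>\<^sup>+x. ennreal (G x powr enn2real s) \<partial>M) = (\<integral>\<^sup>+x. ennreal (F x) + ennreal (h x) \<partial>M)"
    using F_h_pos S_real_pos h_pos by (intro nn_integral_cong) (simp add: G_def powr_powr less_imp_le F_def)
  also have "\<dots> = (\<integral>\<^sup>+x. ennreal (F x) \<partial>M) + (\<integral>\<^sup>+x. ennreal (h x) \<partial>M)"
    by (rule nn_integral_add) (auto simp: F_def)
  finally have G_integrable: "(\<integral>\<^sup>+x. ennreal (G x powr enn2real s) \<partial>M) \<noteq> top"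
    using nn_integral_powr_less_top_if_Lpw[OF f v positive(4) p] h_integrable by (simp add: F_def top.not_eq_extremum)
  obtain \<Psi> where [measurable]: "\<Psi> \<in> borel_measurable M" and G_le_\<Psi>: "\<And>x. x \<in> space M \<Longrightarrow> G x \<le> \<Psi> x"
    and wv: "wv_const M \<U> s0 r0 (\<lambda>x. w x * \<Psi> x powr -q) (\<lambda>x. v x * \<Psi> x powr -q) < top"
  proof (rule Rubio_de_Francia_rescaling_factor[OF B w v K _ _ _ _ _ G_integrable])
    show "maxop_bounded M \<U> (ennreal (enn2real s / \<alpha>)) (vt_weight gi s0 r0 w v) (wt_weight gi s0 r0 w v)"
      using bounded gi by (simp add: t_exp_def S_divide_alpha)
  qed (use gi G_pos in \<open>auto simp: vt_weight_def wt_weight_def G_def F_def\<close>)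
  have \<Psi>_pos: "0 < \<Psi> x" if "x \<in> space M" for x using G_pos[of x] G_le_\<Psi>[OF that] by simp
  have "f \<in> Lpw M p0 (\<lambda>x. v x * \<Psi> x powr -(enn2real s * gi))"
  proof (rule Lpw_rescaled_weight_down[OF f v positive(4,1) rcp_p gi S_real_pos])
    fix x assume x: "x \<in> space M"
    have "(\<bar>f x\<bar> * v x) powr (enn2real p / enn2real s) = F x powr (1 / enn2real s)"
      by (simp add: F_def powr_powr)
    also have "\<dots> \<le> G x" unfolding G_def using h_pos[of x] S_real_pos by (intro powr_mono2) (auto simp: F_def)
    finally show "(\<bar>f x\<bar> * v x) powr (enn2real p / enn2real s) \<le> \<Psi> x" using G_le_\<Psi>[OF x] by simp
  qed measurable
  moreover have "((\<lambda>x. w x * \<Psi> x powr -q), (\<lambda>x. v x * \<Psi> x powr -q)) \<in> W_class M \<U> gi s0 r0 w v"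
    using gi w v \<Psi>_pos wv by (intro rescaled_pair_in_W_class) auto
  ultimately show ?thesis by auto
qed

lemma extrapolation_neg:
  assumes sf: "sigma_finite_measure M" and B: "basis_of_sets M \<U>"
    and positive: "0 < p0" "0 < s0" "0 < r0" "0 < p" "0 < s" "0 < r"
    and rcp_p: "rcp p - rcp p0 = gi" and rcp_s: "rcp s - rcp s0 = gi" and rcp_r: "rcp r0 - rcp r = gi"
    and gi: "gi < 0" and w: "weight M w" and v: "weight M v"
    and K: "wv_const M \<U> s r w v < top"
    and bounded: "maxop_bounded M \<U> (t_exp gi s0 r0 s r) (vt_weight gi s0 r0 w v) (wt_weight gi s0 r0 w v)"
    and f: "f \<in> Lpw M p v"
  shows "\<exists>(w0, v0) \<in> W_class M \<U> gi s0 r0 w v. f \<in> Lpw M p0 v0"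
proof -
  interpret rescaled_exponents r s r0 s0 "-gi"
    using positive gi rcp_s rcp_r by unfold_locales auto
  have \<alpha>: "alpha_exp s0 r0 = \<alpha>" by (simp add: alpha_exp_def add.commute)
  have [measurable]: "w \<in> borel_measurable M" "v \<in> borel_measurable M"
    and w_pos: "\<And>x. x \<in> space M \<Longrightarrow> 0 < w x" and v_pos: "\<And>x. x \<in> space M \<Longrightarrow> 0 < v x"
    using w v by (simp_all add: weightD)
  define W where "W x = 1 / v x" for x
  define V where "V x = 1 / w x" for x
  have [measurable]: "W \<in> borel_measurable M" "V \<in> borel_measurable M"
    unfolding W_def[abs_def] V_def[abs_def] by measurable
  then have W: "weight M W" and V: "weight M V" using w_pos v_pos by (auto simp: weight_def W_def V_def)
  have "wv_const M \<U> r s W V < top"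
    using K wv_const_swap[OF B positive(5,6), of w v W V] w_pos by (simp add: W_def V_def)
  obtain h where [measurable]: "h \<in> borel_measurable M" and h_pos: "\<And>x. 0 < h x"
    and h_integrable: "(\<integral>\<^sup>+x. ennreal (h x) \<partial>M) \<noteq> top"
    using obtain_positive_nn_integrable[OF sf] by metis
  define G where "G x = h x powr (1 / enn2real r)" for x
  have G_pos: "0 < G x" for x using h_pos[of x] by (simp add: G_def)
  have "(\<integral>\<^sup>+x. ennreal (G x powr enn2real r) \<partial>M) = (\<integral>\<^sup>+x. ennreal (h x) \<partial>M)"
    using h_pos S_real_pos by (intro nn_integral_cong) (simp add: G_def powr_powr less_imp_le)
  then have G_integrable: "(\<integral>\<^sup>+x. ennreal (G x powr enn2real r) \<partial>M) \<noteq> top"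
    using h_integrable by simp
  obtain \<Psi> where [measurable]: "\<Psi> \<in> borel_measurable M" and G_le_\<Psi>: "\<And>x. x \<in> space M \<Longrightarrow> G x \<le> \<Psi> x"
    and \<Psi>_integrable: "(\<integral>\<^sup>+x. ennreal (\<Psi> x powr enn2real r) \<partial>M) \<noteq> top"
    and wv: "wv_const M \<U> r0 s0 (\<lambda>x. W x * \<Psi> x powr -q) (\<lambda>x. V x * \<Psi> x powr -q) < top"
  proof (rule Rubio_de_Francia_rescaling_factor[OF B W V \<open>wv_const M \<U> r s W V < top\<close> _ _ _ _ _ G_integrable])
    show "maxop_bounded M \<U> (ennreal (enn2real r / \<alpha>)) (vt_weight gi s0 r0 w v) (wt_weight gi s0 r0 w v)"
      using bounded gi by (simp add: t_exp_def S_divide_alpha \<alpha>)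
    show "vt_weight gi s0 r0 w v x = V x powr \<alpha>" "wt_weight gi s0 r0 w v x = W x powr \<alpha>"
      if "x \<in> space M" for x
      using gi w_pos[OF that] v_pos[OF that]
      by (simp_all add: vt_weight_def wt_weight_def W_def V_def \<alpha> powr_minus divide_inverse inverse_powr)
  qed (use G_pos in \<open>auto simp: G_def\<close>)
  have \<Psi>_pos: "0 < \<Psi> x" if "x \<in> space M" for x using G_pos[of x] G_le_\<Psi>[OF that] by simp
  have "f \<in> Lpw M p0 (\<lambda>x. v x * \<Psi> x powr (enn2real r * -gi))"
    using rcp_p gi by (intro Lpw_rescaled_weight_up[OF f v positive(4,1) _ _ S_real_pos _ \<Psi>_pos \<Psi>_integrable])
      auto
  moreover have "((\<lambda>x. w x * \<Psi> x powr q), (\<lambda>x. v x * \<Psi> x powr q)) \<in> W_class M \<U> gi s0 r0 w v"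
  proof (rule rescaled_pair_in_W_class)
    have "wv_const M \<U> s0 r0 (\<lambda>x. w x * \<Psi> x powr q) (\<lambda>x. v x * \<Psi> x powr q)
        = wv_const M \<U> r0 s0 (\<lambda>x. W x * \<Psi> x powr -q) (\<lambda>x. V x * \<Psi> x powr -q)"
      using w_pos \<Psi>_pos
      by (intro wv_const_swap[OF B positive(2,3)])
        (auto simp: W_def V_def powr_minus divide_inverse less_imp_neq[symmetric] intro!: mult_pos_pos)
    then show "wv_const M \<U> s0 r0 (\<lambda>x. w x * \<Psi> x powr q) (\<lambda>x. v x * \<Psi> x powr q) < top"
      using wv by simp
  qed (use gi w v \<Psi>_pos in auto)
  ultimately show ?thesis by auto
qed

theorem corollary2p5:
  fixes M :: "'a measure" and \<U> :: "'a set set"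
    and p0 s0 r0 p s r :: ennreal and gi :: real
    and w v :: "'a \<Rightarrow> real"
  assumes "sigma_finite_measure M"
    and "basis_of_sets M \<U>"
    and "0 < p0" "0 < s0" "0 < r0" "0 < p" "0 < s" "0 < r"
    and "rcp p - rcp p0 = gi" "rcp s - rcp s0 = gi" "rcp r0 - rcp r = gi"
    and "weight M w" "weight M v"
    and "wv_const M \<U> s r w v < \<infinity>"
    and "gi \<noteq> 0 \<Longrightarrow> maxop_bounded M \<U> (t_exp gi s0 r0 s r)
            (vt_weight gi s0 r0 w v) (wt_weight gi s0 r0 w v)"
  shows "Lpw M p v \<subseteq> (\<Union>(w0, v0) \<in> W_class M \<U> gi s0 r0 w v. Lpw M p0 v0)"
proof
  fix f assume f: "f \<in> Lpw M p v"
  consider "gi < 0" | "gi = 0" | "0 < gi" by linarith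
  then have "\<exists>(w0, v0) \<in> W_class M \<U> gi s0 r0 w v. f \<in> Lpw M p0 v0"
  proof cases
    case 1
    with assms f show ?thesis by (intro extrapolation_neg) auto
  next
    case 2
    then have "p = p0" using assms(3,6,9) rcp_inj by simp
    then show ?thesis using f 2 by (simp add: W_class_def)
  next
    case 3
    with assms f show ?thesis by (intro extrapolation_pos) auto
  qed
  then show "f \<in> (\<Union>(w0, v0) \<in> W_class M \<U> gi s0 r0 w v. Lpw M p0 v0)" by blast
qed
end
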